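(* Let $\Gamma$ be a finitely generated group acting cocompactly by automorphisms without edge inversions on a tree, such that no vertex is fixed by all of $\Gamma$ and all edge stabilizers are amenable. Then $\Gamma$ is extraterrestrial.
   Context: Cocompact means the quotient graph of the tree by $\Gamma$ is finite. A finitely generated group is extraterrestrial if its Cayley graph with respect to some (equivalently any) finite symmetric generating set is extraterrestrial, where a graph $G=(V,E)$ is extraterrestrial if for every $m$ there is $k$ such that for every $r$ there is a triple $(U,F,O)$ of pairwise disjoint finite vertex sets with $U\neq\emptyset$, $|U|\ge m|F|$, a bijection $\mu:U\to O$ with $d_G(u,\mu(u))\le k$, and every path from $U$ to $O$ either contains a vertex of $F$ or has length at least $r$. *)

theory Defs
  imports Complex_Main "HOL-Algebra.Group_Action" "HOL-Algebra.Generated_Groups"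
begin

text \<open>A walk is a nonempty list of vertices of V, consecutive ones adjacent;
  its length is the number of edges, i.e. length of the list minus one.\<close>

definition walk :: "'v set \<Rightarrow> ('v \<Rightarrow> 'v \<Rightarrow> bool) \<Rightarrow> 'v list \<Rightarrow> bool" where
  "walk V E xs \<longleftrightarrow> xs \<noteq> [] \<and> set xs \<subseteq> V \<and>
     (\<forall>i. Suc i < length xs \<longrightarrow> E (xs ! i) (xs ! Suc i))"

definition dist_le :: "'v set \<Rightarrow> ('v \<Rightarrow> 'v \<Rightarrow> bool) \<Rightarrow> 'v \<Rightarrow> 'v \<Rightarrow> nat \<Rightarrow> bool" where
  "dist_le V E u v k \<longleftrightarrow>
     (\<exists>xs. walk V E xs \<and> hd xs = u \<and> last xs = v \<and> length xs - 1 \<le> k)"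

definition extraterrestrial :: "'v set \<Rightarrow> ('v \<Rightarrow> 'v \<Rightarrow> bool) \<Rightarrow> bool" where
  "extraterrestrial V E \<longleftrightarrow>
     (\<forall>m::nat. \<exists>k::nat. \<forall>r::nat. \<exists>U F Ob.
        U \<subseteq> V \<and> F \<subseteq> V \<and> Ob \<subseteq> V \<and>
        finite U \<and> finite F \<and> finite Ob \<and>
        U \<inter> F = {} \<and> U \<inter> Ob = {} \<and> F \<inter> Ob = {} \<and>
        U \<noteq> {} \<and> card U \<ge> m * card F \<and>
        (\<exists>\<mu>. bij_betw \<mu> U Ob \<and> (\<forall>u\<in>U. dist_le V E u (\<mu> u) k)) \<and>
        (\<forall>xs. walk V E xs \<and> hd xs \<in> U \<and> last xs \<in> Ob \<longrightarrow>
             (\<exists>x\<in>set xs. x \<in> F) \<or> length xs - 1 \<ge> r))"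

definition is_tree :: "('v \<Rightarrow> 'v \<Rightarrow> bool) \<Rightarrow> bool" where
  "is_tree E \<longleftrightarrow>
     (\<forall>u v. E u v \<longrightarrow> E v u) \<and> (\<forall>u. \<not> E u u) \<and>
     (\<forall>u v. \<exists>xs. walk UNIV E xs \<and> hd xs = u \<and> last xs = v) \<and>
     \<not> (\<exists>xs. walk UNIV E xs \<and> distinct xs \<and> length xs \<ge> 3 \<and> E (last xs) (hd xs))"

definition finitely_generated :: "('g, 'b) monoid_scheme \<Rightarrow> bool" where
  "finitely_generated G \<longleftrightarrow>
     (\<exists>S. finite S \<and> S \<subseteq> carrier G \<and> generate G S = carrier G)"

definition amenable :: "('g, 'b) monoid_scheme \<Rightarrow> bool" where
  "amenable G \<longleftrightarrow>
     (\<exists>\<mu> :: 'g set \<Rightarrow> real.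
        \<mu> (carrier G) = 1 \<and>
        (\<forall>A. A \<subseteq> carrier G \<longrightarrow> \<mu> A \<ge> 0) \<and>
        (\<forall>A B. A \<subseteq> carrier G \<longrightarrow> B \<subseteq> carrier G \<longrightarrow> A \<inter> B = {} \<longrightarrow>
              \<mu> (A \<union> B) = \<mu> A + \<mu> B) \<and>
        (\<forall>g A. g \<in> carrier G \<longrightarrow> A \<subseteq> carrier G \<longrightarrow>
              \<mu> ((\<lambda>x. g \<otimes>\<^bsub>G\<^esub> x) ` A) = \<mu> A))"

definition cayley_adj :: "('g, 'b) monoid_scheme \<Rightarrow> 'g set \<Rightarrow> 'g \<Rightarrow> 'g \<Rightarrow> bool" where
  "cayley_adj G S x y \<longleftrightarrow>
     x \<in> carrier G \<and> y \<in> carrier G \<and> (\<exists>s\<in>S. y = x \<otimes>\<^bsub>G\<^esub> s)"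

definition extraterrestrial_group :: "('g, 'b) monoid_scheme \<Rightarrow> bool" where
  "extraterrestrial_group G \<longleftrightarrow>
     (\<exists>S. finite S \<and> S \<subseteq> carrier G \<and> (\<forall>s\<in>S. inv\<^bsub>G\<^esub> s \<in> S) \<and>
          generate G S = carrier G \<and>
          extraterrestrial (carrier G) (cayley_adj G S))"

definition acts_on_tree ::
  "('g, 'b) monoid_scheme \<Rightarrow> ('g \<Rightarrow> 'v \<Rightarrow> 'v) \<Rightarrow> ('v \<Rightarrow> 'v \<Rightarrow> bool) \<Rightarrow> bool" where
  "acts_on_tree G \<phi> T \<longleftrightarrow> group_action G UNIV \<phi> \<and> is_tree T \<and>
     (\<forall>g\<in>carrier G. \<forall>u v. T u v \<longleftrightarrow> T (\<phi> g u) (\<phi> g v))"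

definition without_inversions ::
  "('g, 'b) monoid_scheme \<Rightarrow> ('g \<Rightarrow> 'v \<Rightarrow> 'v) \<Rightarrow> ('v \<Rightarrow> 'v \<Rightarrow> bool) \<Rightarrow> bool" where
  "without_inversions G \<phi> T \<longleftrightarrow>
     \<not> (\<exists>g\<in>carrier G. \<exists>u v. T u v \<and> \<phi> g u = v \<and> \<phi> g v = u)"

text \<open>Cocompact: the quotient graph has finitely many vertices (vertex orbits)
  and finitely many edges (orbits of oriented edges).\<close>
definition cocompact ::
  "('g, 'b) monoid_scheme \<Rightarrow> ('g \<Rightarrow> 'v \<Rightarrow> 'v) \<Rightarrow> ('v \<Rightarrow> 'v \<Rightarrow> bool) \<Rightarrow> bool" where
  "cocompact G \<phi> T \<longleftrightarrow>
     finite ((\<lambda>u. orbit G \<phi> u) ` UNIV) \<and>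
     finite ((\<lambda>(u, v). {(\<phi> g u, \<phi> g v) | g. g \<in> carrier G}) ` {(u, v). T u v})"

definition edge_stabilizer ::
  "('g, 'b) monoid_scheme \<Rightarrow> ('g \<Rightarrow> 'v \<Rightarrow> 'v) \<Rightarrow> 'v \<Rightarrow> 'v \<Rightarrow> 'g set" where
  "edge_stabilizer G \<phi> u v =
     {g \<in> carrier G. (\<phi> g u = u \<and> \<phi> g v = v) \<or> (\<phi> g u = v \<and> \<phi> g v = u)}"

end

theory Submission
  imports Defs "HOL-Library.Countable_Set"
begin

text \<open>Without inversions, a bounded orbit has a fixed centre, so the orbit of a base vertex x0
  is unbounded, and by cocompactness a single orbit of arcs, that of (a, b), contains
  unboundedly many arcs separating x0 from translates g x0.  Take g and a large set E of such
  arcs c (a, b) that do not separate x0 from its Cayley neighbours s x0.  For a finite subset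
  A of the stabilizer H of (a, b), every element of U = A c^-1 (c ranging over E) moves x0
  and its neighbours to the a-side of (a, b), while u g moves x0 to the b-side.  A walk of
  length below r from U to U g therefore passes a crossing of (a, b) within distance r of U;
  such crossings lie in (A K) D for a finite K \<subseteq> H and a set D of neighbour arcs.  Amenability
  of H provides A with |A K| \<le> 2 |A|, so there are few crossings compared to |U| = |E| |A|.\<close>

section \<open>Walks and half trees\<close>

lemma walk_iff_successively: "walk V E xs \<longleftrightarrow> xs \<noteq> [] \<and> set xs \<subseteq> V \<and> successively E xs"
  unfolding walk_def successively_conv_nth by auto

lemma successively_rtranclp: "successively R xs \<Longrightarrow> xs \<noteq> [] \<Longrightarrow> R\<^sup>*\<^sup>* (hd xs) (last xs)"
  by (induction R xs rule: successively.induct) auto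

lemma rtranclp_imp_distinct_successively:
  assumes "R\<^sup>*\<^sup>* u v"
  shows "\<exists>xs. xs \<noteq> [] \<and> successively R xs \<and> distinct xs \<and> hd xs = u \<and> last xs = v"
  using assms
proof (induction rule: converse_rtranclp_induct)
  case base
  show ?case by (intro exI[of _ "[v]"]) auto
next
  case (step y z)
  then obtain xs where xs: "xs \<noteq> []" "successively R xs" "distinct xs" "hd xs = z" "last xs = v"
    by blast
  show ?case
  proof (cases "y \<in> set xs")
    case True
    then obtain pre post where "xs = pre @ y # post" by (meson split_list)
    then show ?thesis using xs by (intro exI[of _ "y # post"]) (auto simp: successively_append_iff)
  next
    case False
    then show ?thesis using xs step(1) by (intro exI[of _ "y # xs"]) (auto simp: successively_Cons)
  qed
qed

lemma successively_first_exit: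
  "successively R xs \<Longrightarrow> xs \<noteq> [] \<Longrightarrow> P (hd xs) \<Longrightarrow> \<not> P (last xs) \<Longrightarrow>
    \<exists>j. Suc j < length xs \<and> P (xs ! j) \<and> \<not> P (xs ! Suc j)"
proof (induction R xs rule: successively.induct)
  case (3 R x y xs)
  show ?case
  proof (cases "P y")
    case True
    then obtain j where "Suc j < length (y # xs)" "P ((y # xs) ! j)" "\<not> P ((y # xs) ! Suc j)"
      using 3 by auto
    then show ?thesis by (intro exI[of _ "Suc j"]) auto
  next
    case False
    then show ?thesis using 3 by (intro exI[of _ 0]) auto
  qed
qed auto

definition del_edge :: "('v \<Rightarrow> 'v \<Rightarrow> bool) \<Rightarrow> 'v \<Rightarrow> 'v \<Rightarrow> 'v \<Rightarrow> 'v \<Rightarrow> bool" where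
  "del_edge T x y u v \<longleftrightarrow> T u v \<and> \<not> (u = x \<and> v = y) \<and> \<not> (u = y \<and> v = x)"

definition half_tree :: "('v \<Rightarrow> 'v \<Rightarrow> bool) \<Rightarrow> 'v \<Rightarrow> 'v \<Rightarrow> 'v set" where
  "half_tree T x y = {z. (del_edge T x y)\<^sup>*\<^sup>* z y}"

definition sep_edges :: "('v \<Rightarrow> 'v \<Rightarrow> bool) \<Rightarrow> 'v \<Rightarrow> 'v \<Rightarrow> ('v \<times> 'v) set" where
  "sep_edges T x y = {(p, q). T p q \<and> x \<notin> half_tree T p q \<and> y \<in> half_tree T p q}"

text \<open>The graph distance: the path from x to y crosses exactly the arcs in sep_edges T x y.\<close>
definition tree_dist :: "('v \<Rightarrow> 'v \<Rightarrow> bool) \<Rightarrow> 'v \<Rightarrow> 'v \<Rightarrow> nat" where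
  "tree_dist T x y = card (sep_edges T x y)"

lemma del_edge_swap: "del_edge T y x = del_edge T x y"
  unfolding del_edge_def by (intro ext) auto

locale tree =
  fixes T :: "'v \<Rightarrow> 'v \<Rightarrow> bool"
  assumes is_tree: "is_tree T"
begin

lemma adj_sym: "T u v \<Longrightarrow> T v u"
  using is_tree unfolding is_tree_def by blast

lemma adj_irrefl: "\<not> T u u"
  using is_tree unfolding is_tree_def by blast

lemma connected: "T\<^sup>*\<^sup>* u v"
proof -
  obtain xs where "walk UNIV T xs" "hd xs = u" "last xs = v"
    using is_tree unfolding is_tree_def by blast
  then show ?thesis using successively_rtranclp unfolding walk_iff_successively by blast
qed

lemma no_cycle: "successively T xs \<Longrightarrow> distinct xs \<Longrightarrow> 3 \<le> length xs \<Longrightarrow> \<not> T (last xs) (hd xs)"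
proof -
  have "\<not> (\<exists>xs. walk UNIV T xs \<and> distinct xs \<and> length xs \<ge> 3 \<and> T (last xs) (hd xs))"
    using is_tree unfolding is_tree_def by blast
  moreover assume "successively T xs" "distinct xs" "3 \<le> length xs"
  ultimately show ?thesis unfolding walk_iff_successively by auto
qed

lemma del_edge_sym: "del_edge T x y u v \<Longrightarrow> del_edge T x y v u"
  unfolding del_edge_def using adj_sym by blast

lemma del_edge_rtranclp_sym: "(del_edge T x y)\<^sup>*\<^sup>* u v \<Longrightarrow> (del_edge T x y)\<^sup>*\<^sup>* v u"
proof (induction rule: rtranclp_induct)
  case (step v w)
  then show ?case using del_edge_sym converse_rtranclp_into_rtranclp by metis
qed simp

lemma half_tree_refl: "y \<in> half_tree T x y"
  unfolding half_tree_def by simp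

lemma half_tree_step: "z \<in> half_tree T x y \<Longrightarrow> del_edge T x y z' z \<Longrightarrow> z' \<in> half_tree T x y"
  unfolding half_tree_def by (simp add: converse_rtranclp_into_rtranclp)

text \<open>A path from the tail to the head avoiding the edge would close a cycle with it.\<close>
lemma tail_notin_half_tree:
  assumes "T x y"
  shows "x \<notin> half_tree T x y"
proof
  assume "x \<in> half_tree T x y"
  then have "(del_edge T x y)\<^sup>*\<^sup>* x y" unfolding half_tree_def by simp
  from rtranclp_imp_distinct_successively[OF this] obtain xs where
    xs: "xs \<noteq> []" "successively (del_edge T x y) xs" "distinct xs" "hd xs = x" "last xs = y"
    by blast
  have "x \<noteq> y" using assms adj_irrefl by metis
  then have "length xs \<noteq> 1" using xs(1,4,5) by (cases xs) auto
  moreover have "length xs \<noteq> 2"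
  proof
    assume "length xs = 2"
    then obtain u v where "xs = [u, v]" by (cases xs; cases "tl xs") auto
    then show False using xs(2,4,5) unfolding del_edge_def by auto
  qed
  moreover have "length xs \<noteq> 0" using xs(1) by simp
  ultimately have "3 \<le> length xs" by linarith
  moreover have "successively T xs"
    using xs(2) by (rule successively_mono) (simp add: del_edge_def)
  ultimately have "\<not> T (last xs) (hd xs)" using no_cycle xs(3) by blast
  then show False using xs(4,5) adj_sym[OF assms] by simp
qed

lemma half_tree_cover:
  assumes "T x y"
  shows "z \<in> half_tree T x y \<or> z \<in> half_tree T y x"
  using connected[of z y]
proof (induction rule: converse_rtranclp_induct)
  case base
  then show ?case by (simp add: half_tree_refl)
next
  case (step z z')
  show ?case
  proof (cases "del_edge T x y z z'")
    case True
    then have "del_edge T y x z z'" by (simp add: del_edge_swap)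
    then show ?thesis using True step.IH half_tree_step[of z' x y z] half_tree_step[of z' y x z] by blast
  next
    case False
    then have "(z = x \<and> z' = y) \<or> (z = y \<and> z' = x)" using step(1) unfolding del_edge_def by blast
    then show ?thesis using half_tree_refl by metis
  qed
qed

lemma half_tree_disjoint:
  assumes "T x y"
  shows "z \<notin> half_tree T x y \<or> z \<notin> half_tree T y x"
proof (rule ccontr)
  assume "\<not> ?thesis"
  then have "(del_edge T x y)\<^sup>*\<^sup>* z y" "(del_edge T x y)\<^sup>*\<^sup>* z x"
    unfolding half_tree_def by (simp_all add: del_edge_swap[of T y x])
  then have "(del_edge T x y)\<^sup>*\<^sup>* x y" using del_edge_rtranclp_sym rtranclp_trans by metis
  then show False using tail_notin_half_tree[OF assms] unfolding half_tree_def by simp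
qed

lemma half_tree_compl: "T x y \<Longrightarrow> z \<in> half_tree T y x \<longleftrightarrow> z \<notin> half_tree T x y"
  using half_tree_cover[of x y z] half_tree_disjoint[of x y z] by blast

lemma half_tree_boundary:
  assumes "T x y" "T u v" "u \<in> half_tree T x y" "v \<notin> half_tree T x y"
  shows "u = y \<and> v = x"
proof -
  have "\<not> del_edge T x y v u" using assms(3,4) half_tree_step[of u x y v] by blast
  then have "(v = x \<and> u = y) \<or> (v = y \<and> u = x)" using adj_sym[OF assms(2)] unfolding del_edge_def by blast
  then show ?thesis using assms(3) tail_notin_half_tree[OF assms(1)] by blast
qed

lemma sep_edges_self: "sep_edges T x x = {}"
  unfolding sep_edges_def by auto

lemma sep_edges_step:
  assumes "T x z"
  shows "sep_edges T x w \<subseteq> insert (x, z) (sep_edges T z w)"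
proof
  fix e assume e: "e \<in> sep_edges T x w"
  then obtain p q where pq: "e = (p, q)" "T p q" "x \<notin> half_tree T p q" "w \<in> half_tree T p q"
    unfolding sep_edges_def by blast
  show "e \<in> insert (x, z) (sep_edges T z w)"
  proof (cases "z \<in> half_tree T p q")
    case True
    then have "z = q \<and> x = p" using half_tree_boundary[OF pq(2) adj_sym[OF assms]] pq(3) by blast
    then show ?thesis using pq(1) by simp
  next
    case False
    then have "e \<in> sep_edges T z w" using pq unfolding sep_edges_def by blast
    then show ?thesis by simp
  qed
qed

lemma finite_sep_edges: "finite (sep_edges T x w)"
  using connected[of x w]
proof (induction rule: converse_rtranclp_induct)
  case base
  then show ?case by (simp add: sep_edges_self)
next
  case (step x z)
  then show ?case using finite_subset[OF sep_edges_step[OF step(1)]] by simp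
qed

lemma sep_edges_half_tree:
  assumes "T x z" "w \<in> half_tree T x z"
  shows "sep_edges T x w = insert (x, z) (sep_edges T z w)" "(x, z) \<notin> sep_edges T z w"
proof -
  have "(x, z) \<in> sep_edges T x w"
    using assms tail_notin_half_tree unfolding sep_edges_def by auto
  moreover have "(z, x) \<notin> sep_edges T z w"
    using half_tree_disjoint assms unfolding sep_edges_def by auto
  then have "sep_edges T z w \<subseteq> sep_edges T x w"
    using sep_edges_step[OF adj_sym[OF assms(1)], of w] by blast
  ultimately show "sep_edges T x w = insert (x, z) (sep_edges T z w)"
    using sep_edges_step[OF assms(1), of w] by blast
  show "(x, z) \<notin> sep_edges T z w"
    using half_tree_refl unfolding sep_edges_def by auto
qed

lemma tree_dist_half_tree: "T x z \<Longrightarrow> w \<in> half_tree T x z \<Longrightarrow> tree_dist T x w = Suc (tree_dist T z w)"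
  unfolding tree_dist_def using sep_edges_half_tree finite_sep_edges by (metis card_insert_disjoint)

lemma exists_adj_toward:
  assumes "x \<noteq> y"
  shows "\<exists>z. T x z \<and> y \<in> half_tree T x z"
  using connected[of y x] assms
proof (induction rule: converse_rtranclp_induct)
  case base
  then show ?case by simp
next
  case (step y y')
  show ?case
  proof (cases "y' = x")
    case True
    then show ?thesis using step half_tree_refl adj_sym by blast
  next
    case False
    with step.IH obtain z where z: "T x z" "y' \<in> half_tree T x z" by blast
    show ?thesis
    proof (cases "del_edge T x z y y'")
      case True
      then show ?thesis using z half_tree_step by blast
    next
      case False
      then have "(y = x \<and> y' = z) \<or> (y = z \<and> y' = x)"
        using step(1) unfolding del_edge_def by blast
      then show ?thesis using step.prems \<open>y' \<noteq> x\<close> by blast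
    qed
  qed
qed

lemma tree_dist_eq_0_iff: "tree_dist T x y = 0 \<longleftrightarrow> x = y"
proof
  assume "tree_dist T x y = 0"
  show "x = y"
  proof (rule ccontr)
    assume "x \<noteq> y"
    then obtain z where "T x z" "y \<in> half_tree T x z" using exists_adj_toward by blast
    then have "tree_dist T x y = Suc (tree_dist T z y)" by (rule tree_dist_half_tree)
    then show False using \<open>tree_dist T x y = 0\<close> by simp
  qed
qed (simp add: tree_dist_def sep_edges_self)

lemma tree_dist_eq_1_imp_adj:
  assumes "tree_dist T x y = 1"
  shows "T x y"
proof -
  have "x \<noteq> y" using assms tree_dist_eq_0_iff by force
  then obtain z where z: "T x z" "y \<in> half_tree T x z" using exists_adj_toward by blast
  then have "tree_dist T z y = 0" using tree_dist_half_tree assms by simp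
  then show ?thesis using z tree_dist_eq_0_iff by simp
qed

lemma half_tree_path_avoid:
  assumes "(del_edge T p q)\<^sup>*\<^sup>* u v" "v \<in> half_tree T p q" "u \<in> half_tree T z z'"
    "z \<notin> half_tree T p q" "T z z'"
  shows "v \<in> half_tree T z z'"
  using assms
proof (induction rule: rtranclp_induct)
  case (step v' v)
  have "v' \<in> half_tree T p q" using step half_tree_step by blast
  then have v': "v' \<in> half_tree T z z'" using step by blast
  show ?case
  proof (cases "del_edge T z z' v v'")
    case True
    then show ?thesis using v' half_tree_step by blast
  next
    case False
    then have "(v = z \<and> v' = z') \<or> (v = z' \<and> v' = z)"
      using adj_sym step(2) unfolding del_edge_def by blast
    then show ?thesis using step.prems \<open>v' \<in> half_tree T p q\<close> by blast
  qed
qed simp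

lemma tree_dist_less:
  assumes "T z z'" "y \<in> half_tree T z z'" "w \<in> half_tree T z' z"
  shows "tree_dist T z w < tree_dist T y w"
proof -
  have "sep_edges T z w \<subseteq> sep_edges T y w"
  proof
    fix e assume "e \<in> sep_edges T z w"
    then obtain p q where pq: "e = (p, q)" "T p q" "z \<notin> half_tree T p q" "w \<in> half_tree T p q"
      unfolding sep_edges_def by blast
    have "y \<notin> half_tree T p q"
    proof
      assume "y \<in> half_tree T p q"
      then have "(del_edge T p q)\<^sup>*\<^sup>* y w"
        using pq(4) del_edge_rtranclp_sym rtranclp_trans unfolding half_tree_def by (metis mem_Collect_eq)
      then have "w \<in> half_tree T z z'" using half_tree_path_avoid pq assms by blast
      then show False using half_tree_disjoint assms by blast
    qed
    then show "e \<in> sep_edges T y w" using pq unfolding sep_edges_def by auto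
  qed
  moreover have "(z', z) \<in> sep_edges T y w"
    using assms half_tree_disjoint adj_sym unfolding sep_edges_def by auto
  moreover have "(z', z) \<notin> sep_edges T z w"
    using half_tree_refl unfolding sep_edges_def by auto
  ultimately have "sep_edges T z w \<subset> sep_edges T y w" by blast
  then show ?thesis unfolding tree_dist_def using finite_sep_edges psubset_card_mono by blast
qed

lemma half_tree_shift:
  assumes "T x z" "T z z'" "z' \<noteq> x" "w \<in> half_tree T z x"
  shows "w \<in> half_tree T z' z"
proof -
  have "(del_edge T z x)\<^sup>*\<^sup>* w x" using assms(4) unfolding half_tree_def by simp
  then have "(del_edge T z' z)\<^sup>*\<^sup>* w x"
  proof (induction rule: converse_rtranclp_induct)
    case (step w w')
    have "w \<in> half_tree T z x" "w' \<in> half_tree T z x"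
      using converse_rtranclp_into_rtranclp[OF step(1,2)] step(2) unfolding half_tree_def by simp_all
    then have "w \<noteq> z" "w' \<noteq> z" using tail_notin_half_tree[OF adj_sym[OF assms(1)]] by blast+
    then have "del_edge T z' z w w'" using step(1) unfolding del_edge_def by blast
    then show ?case using step.IH by (meson converse_rtranclp_into_rtranclp)
  qed simp
  moreover have "del_edge T z' z x z" using assms adj_irrefl unfolding del_edge_def by blast
  ultimately show ?thesis unfolding half_tree_def by simp
qed

end

section \<open>Group actions on trees\<close>

locale tree_action = tree T + group G
  for T :: "'v \<Rightarrow> 'v \<Rightarrow> bool" and G :: "('g, 'b) monoid_scheme" (structure) +
  fixes \<phi> :: "'g \<Rightarrow> 'v \<Rightarrow> 'v"
  assumes action: "group_action G UNIV \<phi>"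
    and adj_act_iff: "g \<in> carrier G \<Longrightarrow> T (\<phi> g u) (\<phi> g v) \<longleftrightarrow> T u v"
begin

lemma act_mult: "g \<in> carrier G \<Longrightarrow> h \<in> carrier G \<Longrightarrow> \<phi> (g \<otimes> h) x = \<phi> g (\<phi> h x)"
  using group_action.composition_rule[OF action] by blast

lemma act_one: "\<phi> \<one> x = x"
  using group_action.id_eq_one[OF action] by (metis restrict_apply' UNIV_I)

lemma act_inv_act: "g \<in> carrier G \<Longrightarrow> \<phi> (inv g) (\<phi> g x) = x"
  by (metis act_mult act_one inv_closed l_inv)

lemma act_act_inv: "g \<in> carrier G \<Longrightarrow> \<phi> g (\<phi> (inv g) x) = x"
  by (metis act_inv_act inv_closed inv_inv)

lemma act_eq_iff: "g \<in> carrier G \<Longrightarrow> \<phi> g x = \<phi> g y \<longleftrightarrow> x = y"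
  by (metis act_inv_act)

lemma del_edge_act:
  "g \<in> carrier G \<Longrightarrow> del_edge T x y u v \<Longrightarrow> del_edge T (\<phi> g x) (\<phi> g y) (\<phi> g u) (\<phi> g v)"
  unfolding del_edge_def by (simp add: adj_act_iff act_eq_iff)

lemma act_mem_half_tree:
  assumes "g \<in> carrier G" "z \<in> half_tree T x y"
  shows "\<phi> g z \<in> half_tree T (\<phi> g x) (\<phi> g y)"
proof -
  have "(del_edge T (\<phi> g x) (\<phi> g y))\<^sup>*\<^sup>* (\<phi> g z) (\<phi> g w)"
    if "(del_edge T x y)\<^sup>*\<^sup>* z w" for w
    using that by (induction rule: rtranclp_induct)
      (auto intro: rtranclp.rtrancl_into_rtrancl del_edge_act[OF assms(1)])
  then show ?thesis using assms(2) unfolding half_tree_def by simp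
qed

lemma act_mem_half_tree_iff:
  assumes "g \<in> carrier G"
  shows "\<phi> g z \<in> half_tree T (\<phi> g x) (\<phi> g y) \<longleftrightarrow> z \<in> half_tree T x y"
  using act_mem_half_tree[OF inv_closed[OF assms], of "\<phi> g z" "\<phi> g x" "\<phi> g y"]
    act_mem_half_tree[OF assms] act_inv_act[OF assms] by auto

lemma act_mem_sep_edges_iff:
  assumes "g \<in> carrier G"
  shows "(\<phi> g p, \<phi> g q) \<in> sep_edges T (\<phi> g x) (\<phi> g y) \<longleftrightarrow> (p, q) \<in> sep_edges T x y"
  using assms unfolding sep_edges_def by (simp add: act_mem_half_tree_iff adj_act_iff)

lemma sep_edges_act:
  assumes "g \<in> carrier G"
  shows "sep_edges T (\<phi> g x) (\<phi> g y) = (\<lambda>(p, q). (\<phi> g p, \<phi> g q)) ` sep_edges T x y"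
proof (intro equalityI subsetI)
  fix e assume e: "e \<in> sep_edges T (\<phi> g x) (\<phi> g y)"
  obtain p q where pq: "e = (\<phi> g (\<phi> (inv g) p), \<phi> g (\<phi> (inv g) q))"
    using act_act_inv[OF assms] by (metis surj_pair)
  then have "(\<phi> (inv g) p, \<phi> (inv g) q) \<in> sep_edges T x y"
    using e act_mem_sep_edges_iff[OF assms] by simp
  then show "e \<in> (\<lambda>(p, q). (\<phi> g p, \<phi> g q)) ` sep_edges T x y" using pq by force
qed (auto simp: act_mem_sep_edges_iff[OF assms])

lemma tree_dist_act: "g \<in> carrier G \<Longrightarrow> tree_dist T (\<phi> g x) (\<phi> g y) = tree_dist T x y"
  unfolding tree_dist_def sep_edges_act
  by (intro card_image) (auto simp: inj_on_def act_eq_iff)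

definition orbit_center :: "'v \<Rightarrow> nat \<Rightarrow> 'v \<Rightarrow> bool" where
  "orbit_center x0 R v \<longleftrightarrow> (\<forall>g\<in>carrier G. tree_dist T v (\<phi> g x0) \<le> R)"

lemma orbit_center_act:
  assumes "orbit_center x0 R v" "g \<in> carrier G"
  shows "orbit_center x0 R (\<phi> g v)"
  unfolding orbit_center_def
proof
  fix h assume h: "h \<in> carrier G"
  have "tree_dist T (\<phi> g v) (\<phi> h x0) = tree_dist T (\<phi> g v) (\<phi> g (\<phi> (inv g \<otimes> h) x0))"
    using act_mult h assms(2) act_act_inv by simp
  also have "\<dots> = tree_dist T v (\<phi> (inv g \<otimes> h) x0)" using tree_dist_act assms(2) by simp
  also have "\<dots> \<le> R" using assms h unfolding orbit_center_def by simp
  finally show "tree_dist T (\<phi> g v) (\<phi> h x0) \<le> R" .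
qed

text \<open>The neighbour z of x towards y is one step closer than x to the orbit points on its
  far side, and closer than y to all the others.\<close>
lemma orbit_center_between:
  assumes "orbit_center x0 R x" "orbit_center x0 R y" "2 \<le> tree_dist T x y"
  shows "\<exists>z. \<forall>g\<in>carrier G. tree_dist T z (\<phi> g x0) < R"
proof -
  have "x \<noteq> y" using assms(3) tree_dist_eq_0_iff by force
  then obtain z where z: "T x z" "y \<in> half_tree T x z" using exists_adj_toward by blast
  then have "z \<noteq> y" using assms(3) tree_dist_half_tree tree_dist_eq_0_iff by force
  then obtain z' where z': "T z z'" "y \<in> half_tree T z z'" using exists_adj_toward by blast
  have "z' \<noteq> x" using z z' half_tree_disjoint[OF z(1), of y] by blast
  have "tree_dist T z (\<phi> g x0) < R" if g: "g \<in> carrier G" for g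
  proof (cases "\<phi> g x0 \<in> half_tree T x z")
    case True
    then have "tree_dist T x (\<phi> g x0) = Suc (tree_dist T z (\<phi> g x0))"
      using tree_dist_half_tree z(1) by blast
    then show ?thesis using assms(1) g unfolding orbit_center_def by fastforce
  next
    case False
    then have "\<phi> g x0 \<in> half_tree T z' z"
      using half_tree_shift[OF z(1) z'(1) \<open>z' \<noteq> x\<close>] half_tree_compl[OF z(1)] by blast
    then have "tree_dist T z (\<phi> g x0) < tree_dist T y (\<phi> g x0)" using tree_dist_less z' by blast
    then show ?thesis using assms(2) g unfolding orbit_center_def by fastforce
  qed
  then show ?thesis by blast
qed

text \<open>Centers of minimal radius are pairwise adjacent or equal and are permuted by G, so
  a non-fixed one would produce either an inversion or a triangle.\<close>
lemma bounded_orbit_fixed_point: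
  assumes no_inv: "without_inversions G \<phi> T"
    and bounded: "\<forall>g\<in>carrier G. tree_dist T x0 (\<phi> g x0) \<le> R"
  shows "\<exists>v. \<forall>g\<in>carrier G. \<phi> g v = v"
proof -
  define R0 where "R0 = (LEAST R. \<exists>v. orbit_center x0 R v)"
  have "orbit_center x0 R x0" using bounded unfolding orbit_center_def .
  then have "\<exists>v. orbit_center x0 R v" by blast
  then have "\<exists>v. orbit_center x0 R0 v" unfolding R0_def by (rule LeastI)
  then obtain v0 where v0: "orbit_center x0 R0 v0" by blast
  have adj: "T v w" if vw: "orbit_center x0 R0 v" "orbit_center x0 R0 w" "v \<noteq> w" for v w
  proof -
    have "tree_dist T v w < 2"
    proof (rule ccontr)
      assume "\<not> ?thesis"
      then obtain z where z: "\<forall>g\<in>carrier G. tree_dist T z (\<phi> g x0) < R0"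
        using orbit_center_between[OF vw(1,2)] by fastforce
      then have "0 < R0" using one_closed by fastforce
      then have "orbit_center x0 (R0 - 1) z" using z unfolding orbit_center_def by fastforce
      then have "R0 \<le> R0 - 1" unfolding R0_def by (intro Least_le) blast
      then show False using \<open>0 < R0\<close> by simp
    qed
    moreover have "tree_dist T v w \<noteq> 0" using vw(3) tree_dist_eq_0_iff by simp
    ultimately show ?thesis using tree_dist_eq_1_imp_adj by simp
  qed
  show ?thesis
  proof (rule ccontr)
    assume "\<not> ?thesis"
    then obtain g where g: "g \<in> carrier G" "\<phi> g v0 \<noteq> v0" by blast
    define y where "y = \<phi> g v0"
    define y' where "y' = \<phi> g y"
    have cy: "orbit_center x0 R0 y" and cy': "orbit_center x0 R0 y'"
      using orbit_center_act v0 g unfolding y_def y'_def by blast+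
    have "y \<noteq> v0" "y' \<noteq> y" using g act_eq_iff unfolding y_def y'_def by auto
    then have "T v0 y" "T y y'" using adj v0 cy cy' by blast+
    show False
    proof (cases "y' = v0")
      case True
      then show False using no_inv g(1) \<open>T v0 y\<close> unfolding without_inversions_def y'_def y_def by blast
    next
      case False
      then have "T y' v0" using adj v0 cy' by blast
      moreover have "successively T [v0, y, y']" using \<open>T v0 y\<close> \<open>T y y'\<close> by simp
      moreover have "distinct [v0, y, y']" using \<open>y \<noteq> v0\<close> \<open>y' \<noteq> y\<close> False by auto
      ultimately show False using no_cycle[of "[v0, y, y']"] by simp
    qed
  qed
qed

end

lemma acts_on_tree_imp_tree_action:
  assumes "group G" "acts_on_tree G \<phi> T"
  shows "tree_action T G \<phi>"
proof -
  have act: "group_action G UNIV \<phi> \<and> is_tree T \<and> (\<forall>g\<in>carrier G. \<forall>u v. T u v \<longleftrightarrow> T (\<phi> g u) (\<phi> g v))"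
    using assms(2) unfolding acts_on_tree_def .
  show ?thesis
  proof (intro tree_action.intro tree.intro tree_action_axioms.intro)
    show "T (\<phi> g u) (\<phi> g v) \<longleftrightarrow> T u v" if "g \<in> carrier G" for g u v
      using act that by metis
  qed (use act assms(1) in blast)+
qed

section \<open>Hall's marriage theorem\<close>

lemma matching_combine:
  assumes "F \<subseteq> L"
    and "inj_on f1 F" "\<forall>l\<in>F. f1 l \<in> N l" "f1 ` F \<subseteq> X"
    and "inj_on f2 (L - F)" "\<forall>l\<in>L - F. f2 l \<in> N l - X"
  shows "\<exists>f. inj_on f L \<and> (\<forall>l\<in>L. f l \<in> N l)"
proof -
  define f where "f l = (if l \<in> F then f1 l else f2 l)" for l
  have "inj_on f F" using assms(2) unfolding f_def by (simp add: inj_on_def)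
  moreover have "inj_on f (L - F)" using assms(5) unfolding f_def by (simp add: inj_on_def)
  moreover have "f ` F \<inter> f ` (L - F) = {}" using assms(4,6) unfolding f_def by auto
  moreover have "F - (L - F) = F" "(L - F) - F = L - F" by auto
  ultimately have "inj_on f (F \<union> (L - F))" using inj_on_Un[of f F "L - F"] by simp
  moreover have "F \<union> (L - F) = L" using assms(1) by blast
  moreover have "\<forall>l\<in>L. f l \<in> N l" using assms(3,6) unfolding f_def by auto
  ultimately show ?thesis by metis
qed

lemma hall_condition_remove_tight:
  assumes fin: "finite L" "\<forall>l\<in>L. finite (N l)"
    and hall: "\<forall>F\<subseteq>L. card F \<le> card (\<Union>(N ` F))"
    and tight: "F \<subseteq> L" "card (\<Union>(N ` F)) = card F"
    and F': "F' \<subseteq> L - F"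
  shows "card F' \<le> card (\<Union>l\<in>F'. N l - \<Union>(N ` F))"
proof -
  have finite_UN: "finite (\<Union>(N ` F''))" if "F'' \<subseteq> L" for F''
    using that fin by (meson finite_UN_I finite_subset subsetD)
  have "F' \<subseteq> L" "F \<inter> F' = {}" using F' by auto
  then have "finite F" "finite F'" "F \<inter> F' = {}" using tight(1) fin(1) finite_subset by auto
  then have "card F + card F' = card (F \<union> F')" by (simp add: card_Un_disjoint)
  also have "\<dots> \<le> card (\<Union>(N ` (F \<union> F')))"
    using hall tight(1) F' by (metis Diff_subset le_sup_iff order_trans)
  also have "\<dots> = card (\<Union>(N ` F)) + card (\<Union>l\<in>F'. N l - \<Union>(N ` F))"
  proof -
    have "\<Union>(N ` (F \<union> F')) = \<Union>(N ` F) \<union> (\<Union>l\<in>F'. N l - \<Union>(N ` F))" by blast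
    moreover have "finite (\<Union>l\<in>F'. N l - \<Union>(N ` F))"
      using finite_UN[of F'] F' by (auto intro: finite_subset)
    moreover have "\<Union>(N ` F) \<inter> (\<Union>l\<in>F'. N l - \<Union>(N ` F)) = {}" by blast
    ultimately show ?thesis using card_Un_disjoint finite_UN[OF tight(1)] by metis
  qed
  finally show ?thesis using tight(2) by simp
qed

lemma hall_condition_remove_point:
  assumes slack: "\<forall>F\<subseteq>L. F \<noteq> {} \<longrightarrow> F \<noteq> L \<longrightarrow> card F < card (\<Union>(N ` F))"
    and "l \<in> L" "F' \<subseteq> L - {l}"
  shows "card F' \<le> card (\<Union>l'\<in>F'. N l' - {y})"
proof (cases "F' = {}")
  case False
  moreover have "F' \<subseteq> L" "F' \<noteq> L" using assms(2,3) by auto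
  ultimately have "card F' < card (\<Union>(N ` F'))" using slack by blast
  moreover have "card (\<Union>(N ` F')) - 1 \<le> card (\<Union>(N ` F') - {y})"
    using diff_card_le_card_Diff[of "{y}" "\<Union>(N ` F')"] by simp
  ultimately have "card F' \<le> card (\<Union>(N ` F') - {y})" by linarith
  moreover have "\<Union>(N ` F') - {y} = (\<Union>l'\<in>F'. N l' - {y})" by blast
  ultimately show ?thesis by (simp only:)
qed simp

lemma hall_marriage_finite:
  assumes "finite L" "\<forall>l\<in>L. finite (N l)" "\<forall>F\<subseteq>L. card F \<le> card (\<Union>(N ` F))"
  shows "\<exists>f. inj_on f L \<and> (\<forall>l\<in>L. f l \<in> N l)"
  using assms
proof (induction "card L" arbitrary: L N rule: less_induct)
  case less
  note fin = less.prems(1,2) and hall = less.prems(3)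
  show ?case
  proof (cases "\<exists>F. F \<subseteq> L \<and> F \<noteq> {} \<and> F \<noteq> L \<and> card (\<Union>(N ` F)) = card F")
    case True
    then obtain F where F: "F \<subseteq> L" "F \<noteq> {}" "F \<noteq> L" "card (\<Union>(N ` F)) = card F" by blast
    have "card F < card L" using F fin(1) by (meson psubsetI psubset_card_mono)
    then obtain f1 where f1: "inj_on f1 F" "\<forall>l\<in>F. f1 l \<in> N l"
      using less.hyps[of F N] F(1) fin hall finite_subset by (metis subset_iff order_trans)
    have "card (L - F) < card L"
      using F fin(1) by (metis Diff_disjoint Diff_subset Int_absorb2 psubsetI psubset_card_mono)
    moreover have "\<forall>F'\<subseteq>L - F. card F' \<le> card (\<Union>l\<in>F'. N l - \<Union>(N ` F))"
      using hall_condition_remove_tight[OF fin hall F(1,4)] by blast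
    ultimately obtain f2 where "inj_on f2 (L - F)" "\<forall>l\<in>L - F. f2 l \<in> N l - \<Union>(N ` F)"
      using less.hyps[of "L - F" "\<lambda>l. N l - \<Union>(N ` F)"] fin by auto
    moreover have "f1 ` F \<subseteq> \<Union>(N ` F)" using f1(2) by blast
    ultimately show ?thesis using matching_combine[OF F(1) f1] by blast
  next
    case False
    show ?thesis
    proof (cases "L = {}")
      case False
      then obtain l where l: "l \<in> L" by blast
      have "card {l} \<le> card (\<Union>(N ` {l}))" using hall l by blast
      then have "card {l} \<le> card (N l)" by simp
      then obtain y where y: "y \<in> N l" by fastforce
      have slack: "\<forall>F\<subseteq>L. F \<noteq> {} \<longrightarrow> F \<noteq> L \<longrightarrow> card F < card (\<Union>(N ` F))"
        using hall \<open>\<not> (\<exists>F. _)\<close> le_neq_implies_less by metis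
      have "card (L - {l}) < card L" using card_Diff1_less[OF fin(1) l] .
      moreover have "\<forall>F'\<subseteq>L - {l}. card F' \<le> card (\<Union>l'\<in>F'. N l' - {y})"
        using hall_condition_remove_point[OF slack l] by blast
      ultimately obtain f2 where "inj_on f2 (L - {l})" "\<forall>l'\<in>L - {l}. f2 l' \<in> N l' - {y}"
        using less.hyps[of "L - {l}" "\<lambda>l'. N l' - {y}"] fin by auto
      then show ?thesis
        using matching_combine[of "{l}" L "\<lambda>_. y" N "{y}" f2] y l by auto
    qed simp
  qed
qed

text \<open>A diagonal argument in the style of Koenig's lemma: refine an infinite set of indices one
  coordinate at a time.\<close>
lemma finite_choice_compactness:
  fixes F :: "nat \<Rightarrow> nat \<Rightarrow> 'b"
  assumes "\<And>i. finite (C i)" "\<And>n i. i \<le> n \<Longrightarrow> F n i \<in> C i"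
  shows "\<exists>c. \<forall>n. \<exists>m\<ge>n. \<forall>i\<le>n. F m i = c i"
proof -
  define good where "good i I c \<longleftrightarrow> infinite {n\<in>I. i \<le> n \<and> F n i = c}" for i I c
  have ex_good: "\<exists>c. good i I c" if "infinite I" for i I
  proof -
    have inf: "infinite {n\<in>I. i \<le> n}"
      using that finite_subset[of I "{n\<in>I. i \<le> n} \<union> {..<i}"] by fastforce
    have "(\<lambda>n. F n i) ` {n\<in>I. i \<le> n} \<subseteq> C i" using assms(2) by auto
    then have "finite ((\<lambda>n. F n i) ` {n\<in>I. i \<le> n})" using assms(1) finite_subset by blast
    then obtain n0 where "n0 \<in> {n\<in>I. i \<le> n}" "infinite {n\<in>{n\<in>I. i \<le> n}. F n i = F n0 i}"
      using pigeonhole_infinite[OF inf] by blast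
    then have "good i I (F n0 i)" unfolding good_def by simp
    then show ?thesis by blast
  qed
  define refine where "refine i I = {n\<in>I. i \<le> n \<and> F n i = (SOME c. good i I c)}" for i I
  define Is where "Is = rec_nat UNIV refine"
  have Is_Suc: "Is (Suc i) = refine i (Is i)" for i unfolding Is_def by simp
  have infinite_Is: "infinite (Is i)" for i
  proof (induction i)
    case 0
    then show ?case unfolding Is_def by simp
  next
    case (Suc i)
    then have "good i (Is i) (SOME c. good i (Is i) c)" using ex_good by (metis someI_ex)
    then show ?case unfolding Is_Suc refine_def good_def by simp
  qed
  have Is_antimono: "Is j \<subseteq> Is i" if "i \<le> j" for i j
    using lift_Suc_antimono_le[of Is i j] that unfolding Is_Suc refine_def by blast
  define c where "c i = (SOME c. good i (Is i) c)" for i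
  have Is_Suc_agrees: "i \<le> n \<and> F n i = c i" if "n \<in> Is (Suc i)" for n i
    using that unfolding Is_Suc refine_def c_def by simp
  have "\<exists>m\<ge>n. \<forall>i\<le>n. F m i = c i" for n
  proof -
    obtain m where m: "m \<in> Is (Suc n)" using infinite_Is[of "Suc n"] by (metis finite.emptyI ex_in_conv)
    then have "m \<in> Is (Suc i)" if "i \<le> n" for i using Is_antimono that by blast
    then show ?thesis using m Is_Suc_agrees by blast
  qed
  then show ?thesis by blast
qed

lemma hall_marriage_countable:
  assumes "countable L" "\<forall>l\<in>L. finite (N l)"
    and hall: "\<forall>F\<subseteq>L. finite F \<longrightarrow> card F \<le> card (\<Union>(N ` F))"
  shows "\<exists>f. inj_on f L \<and> (\<forall>l\<in>L. f l \<in> N l)"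
proof (cases "finite L")
  case True
  then show ?thesis using hall_marriage_finite assms by (metis finite_subset)
next
  case False
  define e where "e = from_nat_into L"
  have e: "bij_betw e UNIV L" unfolding e_def using bij_betw_from_nat_into assms(1) False .
  then have e_in: "e i \<in> L" for i by (simp add: bij_betw_apply)
  have "\<exists>f. inj_on f (e ` {..n}) \<and> (\<forall>l\<in>e ` {..n}. f l \<in> N l)" for n
  proof (rule hall_marriage_finite)
    show "\<forall>l\<in>e ` {..n}. finite (N l)" using e_in assms(2) by blast
    show "\<forall>F\<subseteq>e ` {..n}. card F \<le> card (\<Union>(N ` F))"
    proof (intro allI impI)
      fix F assume "F \<subseteq> e ` {..n}"
      then have "F \<subseteq> L" "finite F" using e_in finite_subset[of F "e ` {..n}"] by auto
      then show "card F \<le> card (\<Union>(N ` F))" using hall by blast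
    qed
  qed simp
  then obtain M where M: "\<And>n. inj_on (M n) (e ` {..n})" "\<And>n l. l \<in> e ` {..n} \<Longrightarrow> M n l \<in> N l"
    by metis
  obtain c where c: "\<forall>n. \<exists>m\<ge>n. \<forall>i\<le>n. M m (e i) = c i"
    using finite_choice_compactness[of "\<lambda>i. N (e i)" "\<lambda>n i. M n (e i)"] e_in assms(2) M(2) by auto
  define f where "f l = c (inv_into UNIV e l)" for l
  have f_e: "f (e i) = c i" for i
    unfolding f_def using e by (simp add: bij_betw_def)
  have "f l \<in> N l" if l: "l \<in> L" for l
  proof -
    obtain i where i: "l = e i" using e l unfolding bij_betw_def by auto
    obtain m where "m \<ge> i" "M m (e i) = c i" using c by blast
    then show ?thesis using M(2)[of "e i" m] f_e i by simp
  qed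
  moreover have "inj_on f L"
  proof (rule inj_onI)
    fix l l' assume "l \<in> L" "l' \<in> L" "f l = f l'"
    then obtain i j where ij: "l = e i" "l' = e j" "c i = c j"
      using e f_e unfolding bij_betw_def by (metis imageE)
    obtain m where "m \<ge> max i j" "\<forall>i'\<le>max i j. M m (e i') = c i'" using c by blast
    then have m: "m \<ge> max i j" "M m (e i) = c i" "M m (e j) = c j" by simp_all
    have "e i \<in> e ` {..m}" "e j \<in> e ` {..m}" using m(1) by (intro imageI; simp)+
    with m(2,3) ij(3) have "e i = e j" by (intro inj_onD[OF M(1)[of m]]) simp_all
    then show "l = l'" using ij by simp
  qed
  ultimately show ?thesis by blast
qed

section \<open>Invariant means\<close>

lemma (in group) card_inv_image_set_mult:
  assumes "A \<subseteq> carrier G" "K \<subseteq> carrier G"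
  shows "card ((\<lambda>x. inv x) ` K <#> A) = card ((\<lambda>x. inv x) ` A <#> K)"
proof -
  have "(\<lambda>x. inv x) ` ((\<lambda>x. inv x) ` A <#> K) = (\<lambda>x. inv x) ` K <#> A"
    using assms unfolding set_mult_def by (force simp: inv_mult_group)
  moreover have "(\<lambda>x. inv x) ` A <#> K \<subseteq> carrier G"
    using assms unfolding set_mult_def by auto
  ultimately show ?thesis using inv_inj by (metis card_image inj_on_subset)
qed

locale invariant_mean = group G for G :: "('g, 'b) monoid_scheme" (structure) +
  fixes H :: "'g set" and \<mu> :: "'g set \<Rightarrow> real"
  assumes subgroup_H: "subgroup H G"
    and mean_H: "\<mu> H = 1"
    and mean_nonneg: "A \<subseteq> H \<Longrightarrow> 0 \<le> \<mu> A"
    and mean_Un: "A \<subseteq> H \<Longrightarrow> B \<subseteq> H \<Longrightarrow> A \<inter> B = {} \<Longrightarrow> \<mu> (A \<union> B) = \<mu> A + \<mu> B"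
    and mean_translate: "g \<in> H \<Longrightarrow> A \<subseteq> H \<Longrightarrow> \<mu> ((\<lambda>x. g \<otimes> x) ` A) = \<mu> A"
begin

lemma H_subset: "H \<subseteq> carrier G"
  using subgroup.subset[OF subgroup_H] .

lemma mean_empty: "\<mu> {} = 0"
  using mean_Un[of "{}" "{}"] by simp

lemma mean_mono:
  assumes "A \<subseteq> B" "B \<subseteq> H"
  shows "\<mu> A \<le> \<mu> B"
proof -
  have "A \<subseteq> H" "B - A \<subseteq> H" "A \<union> (B - A) = B" using assms by auto
  then have "\<mu> B = \<mu> A + \<mu> (B - A)" using mean_Un[of A "B - A"] by simp
  then show ?thesis using mean_nonneg[OF \<open>B - A \<subseteq> H\<close>] by simp
qed

lemma mean_UN_disjoint:
  assumes "finite J" "\<forall>j\<in>J. B j \<subseteq> H" "\<forall>i\<in>J. \<forall>j\<in>J. i \<noteq> j \<longrightarrow> B i \<inter> B j = {}"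
  shows "\<mu> (\<Union>j\<in>J. B j) = (\<Sum>j\<in>J. \<mu> (B j))"
  using assms
proof (induction J rule: finite_induct)
  case empty
  then show ?case using mean_empty by simp
next
  case (insert j J)
  have "\<forall>i\<in>J. B j \<inter> B i = {}" using insert.prems(2) insert.hyps(2) by (metis insertCI)
  then have "B j \<inter> (\<Union>i\<in>J. B i) = {}" by blast
  then have "\<mu> (B j \<union> (\<Union>i\<in>J. B i)) = \<mu> (B j) + \<mu> (\<Union>i\<in>J. B i)"
    using insert.prems(1) by (intro mean_Un) auto
  then show ?case using insert by simp
qed

text \<open>Cut H into the finitely many pieces on which the translation is constant.\<close>
lemma mean_piecewise_translate:
  assumes K: "finite K" "K \<subseteq> H"
    and f: "inj_on f H" "\<forall>x\<in>H. f x \<in> K <#> {x}"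
  shows "\<mu> (f ` H) = \<mu> H"
proof -
  have "\<forall>x\<in>H. \<exists>c. c \<in> K \<and> f x = c \<otimes> x" using f(2) unfolding set_mult_def by blast
  from bchoice[OF this] obtain k where k: "\<And>x. x \<in> H \<Longrightarrow> k x \<in> K \<and> f x = k x \<otimes> x"
    by blast
  define piece where "piece c = {x\<in>H. k x = c}" for c
  have pieces_H: "piece c \<subseteq> H" for c unfolding piece_def by blast
  have H_eq: "H = (\<Union>c\<in>K. piece c)" unfolding piece_def using k by blast
  have pieces_disjoint: "\<forall>i\<in>K. \<forall>j\<in>K. i \<noteq> j \<longrightarrow> piece i \<inter> piece j = {}"
    unfolding piece_def by blast
  have f_piece: "f ` piece c = (\<lambda>x. c \<otimes> x) ` piece c" for c
    unfolding piece_def using k by (auto simp: image_def)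
  have f_piece_H: "f ` piece c \<subseteq> H" if "c \<in> K" for c
    using that K(2) pieces_H subgroup.m_closed[OF subgroup_H] unfolding f_piece by blast
  have "f ` H = (\<Union>c\<in>K. f ` piece c)" by (subst H_eq) (rule image_UN)
  moreover have "\<forall>i\<in>K. \<forall>j\<in>K. i \<noteq> j \<longrightarrow> f ` piece i \<inter> f ` piece j = {}"
  proof (intro ballI impI)
    fix i j assume "i \<in> K" "j \<in> K" "i \<noteq> j"
    then have "piece i \<inter> piece j = {}" using pieces_disjoint by blast
    then show "f ` piece i \<inter> f ` piece j = {}"
      by (simp add: inj_on_image_Int[OF f(1) pieces_H pieces_H, symmetric])
  qed
  ultimately have "\<mu> (f ` H) = (\<Sum>c\<in>K. \<mu> (f ` piece c))"
    using mean_UN_disjoint[OF K(1)] f_piece_H by simp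
  also have "\<dots> = (\<Sum>c\<in>K. \<mu> (piece c))"
    using K(2) pieces_H mean_translate by (intro sum.cong) (auto simp: f_piece)
  also have "\<dots> = \<mu> (\<Union>c\<in>K. piece c)"
    using mean_UN_disjoint[OF K(1)] pieces_H pieces_disjoint by simp
  finally show ?thesis using H_eq by simp
qed

lemma piecewise_translate_into:
  assumes "K \<subseteq> H" "\<forall>x\<in>H. f x \<in> K <#> {x}"
  shows "f ` H \<subseteq> H"
proof
  fix y assume "y \<in> f ` H"
  then obtain x c where "x \<in> H" "c \<in> K" "y = c \<otimes> x"
    using assms(2) unfolding set_mult_def by fastforce
  then show "y \<in> H" using assms(1) subgroup.m_closed[OF subgroup_H] by blast
qed

lemma no_paradoxical_decomposition:
  assumes K: "finite K" "K \<subseteq> H"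
    and f0: "inj_on f0 H" "\<forall>x\<in>H. f0 x \<in> K <#> {x}"
    and f1: "inj_on f1 H" "\<forall>x\<in>H. f1 x \<in> K <#> {x}"
    and disjoint: "f0 ` H \<inter> f1 ` H = {}"
  shows False
proof -
  note into_H = piecewise_translate_into[OF K(2)]
  have "\<mu> (f0 ` H \<union> f1 ` H) = 2"
    using mean_Un[OF into_H into_H disjoint] f0 f1 K mean_piecewise_translate mean_H by simp
  moreover have "\<mu> (f0 ` H \<union> f1 ` H) \<le> 1"
    using mean_mono[of "f0 ` H \<union> f1 ` H" H] into_H f0(2) f1(2) mean_H by simp
  ultimately show False by simp
qed

lemma doubling_hall_condition:
  assumes K: "K \<subseteq> H"
    and doubling: "\<forall>A\<subseteq>H. finite A \<longrightarrow> A \<noteq> {} \<longrightarrow> 2 * card A < card (A <#> K)"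
    and F: "F \<subseteq> H \<times> (UNIV :: bool set)" "finite F"
  shows "card F \<le> card (\<Union>l\<in>F. (\<lambda>x. inv x) ` K <#> {fst l})"
proof -
  define B where "B = fst ` F"
  have B: "B \<subseteq> H" "finite B" using F unfolding B_def by auto
  have "card F \<le> card (B \<times> (UNIV :: bool set))"
    using B(2) by (intro card_mono) (force simp: B_def)+
  then have card_F: "card F \<le> 2 * card B" by (simp add: card_cartesian_product)
  have UN_eq: "(\<Union>l\<in>F. (\<lambda>x. inv x) ` K <#> {fst l}) = (\<lambda>x. inv x) ` K <#> B"
    unfolding B_def set_mult_def by blast
  show ?thesis
  proof (cases "B = {}")
    case False
    define A where "A = (\<lambda>x. inv x) ` B"
    have "card A = card B"
      unfolding A_def using B(1) H_subset inv_inj by (intro card_image) (meson inj_on_subset order_trans)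
    moreover have "A \<subseteq> H" "finite A" "A \<noteq> {}"
      using B False subgroup.m_inv_closed[OF subgroup_H] unfolding A_def by auto
    ultimately have "2 * card B < card (A <#> K)" using doubling by metis
    also have "\<dots> = card ((\<lambda>x. inv x) ` K <#> B)"
      unfolding A_def using B(1) K H_subset by (intro card_inv_image_set_mult[symmetric]) auto
    finally show ?thesis using card_F UN_eq by simp
  qed (use card_F in simp)
qed

text \<open>Otherwise Hall's theorem turns the doubling into two disjoint piecewise translates of H,
  which the mean forbids.\<close>
lemma small_doubling_set:
  assumes "countable H" "finite K" "K \<subseteq> H"
  shows "\<exists>A. A \<subseteq> H \<and> finite A \<and> A \<noteq> {} \<and> card (A <#> K) \<le> 2 * card A"
proof (rule ccontr)
  assume "\<not> ?thesis"
  then have doubling: "\<forall>A\<subseteq>H. finite A \<longrightarrow> A \<noteq> {} \<longrightarrow> 2 * card A < card (A <#> K)"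
    by (meson not_le)
  define K' where "K' = (\<lambda>x. inv x) ` K"
  have K': "finite K'" "K' \<subseteq> H"
    using assms(2,3) subgroup.m_inv_closed[OF subgroup_H] unfolding K'_def by auto
  obtain f where f: "inj_on f (H \<times> (UNIV :: bool set))"
    "\<forall>l\<in>H \<times> (UNIV :: bool set). f l \<in> K' <#> {fst l}"
  proof -
    have "\<exists>f. inj_on f (H \<times> (UNIV :: bool set)) \<and>
        (\<forall>l\<in>H \<times> (UNIV :: bool set). f l \<in> K' <#> {fst l})"
    proof (rule hall_marriage_countable)
      show "countable (H \<times> (UNIV :: bool set))" using assms(1) by simp
      show "\<forall>l\<in>H \<times> (UNIV :: bool set). finite (K' <#> {fst l})"
        using K'(1) unfolding set_mult_def by simp
      show "\<forall>F\<subseteq>H \<times> (UNIV :: bool set). finite F \<longrightarrow>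
          card F \<le> card (\<Union>l\<in>F. K' <#> {fst l})"
        unfolding K'_def by (intro allI impI) (rule doubling_hall_condition[OF assms(3) doubling])
    qed
    then show ?thesis using that by blast
  qed
  have "inj_on (\<lambda>x. f (x, b)) H" for b using f(1) by (auto simp: inj_on_def)
  moreover have "\<forall>x\<in>H. f (x, b) \<in> K' <#> {x}" for b using f(2) by auto
  moreover have "(\<lambda>x. f (x, False)) ` H \<inter> (\<lambda>x. f (x, True)) ` H = {}"
    using f(1) by (auto simp: inj_on_def)
  ultimately show False using no_paradoxical_decomposition[OF K'] by blast
qed

end

section \<open>Words and Cayley graphs\<close>

definition word_prod :: "('g, 'b) monoid_scheme \<Rightarrow> 'g list \<Rightarrow> 'g" where
  "word_prod G xs = foldr (\<lambda>s acc. s \<otimes>\<^bsub>G\<^esub> acc) xs \<one>\<^bsub>G\<^esub>"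

definition word_ball :: "('g, 'b) monoid_scheme \<Rightarrow> 'g set \<Rightarrow> nat \<Rightarrow> 'g set" where
  "word_ball G S r = word_prod G ` {xs \<in> lists S. length xs < r}"

lemma word_prod_Nil [simp]: "word_prod G [] = \<one>\<^bsub>G\<^esub>"
  unfolding word_prod_def by simp

lemma word_prod_Cons [simp]: "word_prod G (x # xs) = x \<otimes>\<^bsub>G\<^esub> word_prod G xs"
  unfolding word_prod_def by simp

lemma finite_word_ball: "finite S \<Longrightarrow> finite (word_ball G S r)"
  unfolding word_ball_def
  by (rule finite_imageI, rule finite_subset[OF _ finite_lists_length_le[of S r]]) auto

context group
begin

lemma word_prod_closed: "set xs \<subseteq> carrier G \<Longrightarrow> word_prod G xs \<in> carrier G"
  by (induction xs) auto

lemma word_ball_subset: "S \<subseteq> carrier G \<Longrightarrow> word_ball G S r \<subseteq> carrier G"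
  unfolding word_ball_def using word_prod_closed by auto

lemma word_prod_append:
  "set xs \<subseteq> carrier G \<Longrightarrow> set ys \<subseteq> carrier G \<Longrightarrow> word_prod G (xs @ ys) = word_prod G xs \<otimes> word_prod G ys"
  by (induction xs) (auto simp: m_assoc word_prod_closed)

lemma generate_subset_word_prods:
  assumes "S \<subseteq> carrier G" "\<forall>s\<in>S. inv s \<in> S"
  shows "generate G S \<subseteq> word_prod G ` lists S"
proof
  fix h assume "h \<in> generate G S"
  then show "h \<in> word_prod G ` lists S"
  proof (induction rule: generate.induct)
    case one
    show ?case by (rule image_eqI[of _ _ "[]"]) auto
  next
    case (incl h)
    then show ?case using assms by (intro image_eqI[of _ _ "[h]"]) auto
  next
    case (inv h)
    then show ?case using assms by (intro image_eqI[of _ _ "[inv h]"]) auto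
  next
    case (eng h1 h2)
    then obtain xs ys where "xs \<in> lists S" "h1 = word_prod G xs" "ys \<in> lists S" "h2 = word_prod G ys"
      by auto
    moreover have "set xs \<subseteq> carrier G" "set ys \<subseteq> carrier G" using calculation assms(1) by auto
    ultimately show ?case using word_prod_append[of xs ys] by (intro image_eqI[of _ _ "xs @ ys"]) auto
  qed
qed

lemma countable_carrier_if_generated:
  assumes "finite S" "S \<subseteq> carrier G" "\<forall>s\<in>S. inv s \<in> S" "generate G S = carrier G"
  shows "countable (carrier G)"
proof -
  have "countable (word_prod G ` lists S)" using countable_finite[OF assms(1)] by simp
  then show ?thesis using generate_subset_word_prods[OF assms(2,3)] assms(4) countable_subset by metis
qed

lemma cayley_walk_word:
  assumes "S \<subseteq> carrier G" "xs \<in> lists S" "u \<in> carrier G"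
  shows "dist_le (carrier G) (cayley_adj G S) u (u \<otimes> word_prod G xs) (length xs)"
proof -
  have "\<exists>ws. ws \<noteq> [] \<and> successively (cayley_adj G S) ws \<and> set ws \<subseteq> carrier G \<and>
      hd ws = u \<and> last ws = u \<otimes> word_prod G xs \<and> length ws = Suc (length xs)"
    using assms(3) in_lists_conv_set[THEN iffD1, OF assms(2)]
  proof (induction xs arbitrary: u)
    case Nil
    then show ?case by (intro exI[of _ "[u]"]) auto
  next
    case (Cons s xs)
    have s: "s \<in> carrier G" "s \<in> S" using Cons.prems assms(1) by auto
    then obtain ws where ws: "ws \<noteq> []" "successively (cayley_adj G S) ws" "set ws \<subseteq> carrier G"
      "hd ws = u \<otimes> s" "last ws = u \<otimes> s \<otimes> word_prod G xs" "length ws = Suc (length xs)"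
      using Cons.IH[of "u \<otimes> s"] Cons.prems by auto
    have "cayley_adj G S u (u \<otimes> s)" unfolding cayley_adj_def using Cons.prems s by auto
    moreover have "word_prod G xs \<in> carrier G"
      using Cons.prems(2) assms(1) by (intro word_prod_closed) auto
    then have "u \<otimes> s \<otimes> word_prod G xs = u \<otimes> word_prod G (s # xs)"
      using s Cons.prems by (simp add: m_assoc)
    ultimately show ?case using ws Cons.prems
      by (intro exI[of _ "u # ws"]) (auto simp: successively_Cons)
  qed
  then show ?thesis unfolding dist_le_def walk_iff_successively by fastforce
qed

lemma cayley_walk_nth:
  assumes "S \<subseteq> carrier G"
  shows "successively (cayley_adj G S) ws \<Longrightarrow> j < length ws \<Longrightarrow> hd ws \<in> carrier G \<Longrightarrow>
    \<exists>xs\<in>lists S. length xs = j \<and> ws ! j = hd ws \<otimes> word_prod G xs"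
proof (induction "cayley_adj G S" ws arbitrary: j rule: successively.induct)
  case (3 x y ws)
  then obtain s where s: "s \<in> S" "y = x \<otimes> s" "x \<in> carrier G" "y \<in> carrier G"
    unfolding cayley_adj_def by auto
  show ?case
  proof (cases j)
    case 0
    then show ?thesis by (intro bexI[of _ "[]"]) (auto simp: s)
  next
    case (Suc j')
    then obtain zs where zs: "zs \<in> lists S" "length zs = j'" "(y # ws) ! j' = y \<otimes> word_prod G zs"
      using 3 s by auto
    have "word_prod G zs \<in> carrier G" using zs(1) assms by (intro word_prod_closed) auto
    then have "x \<otimes> s \<otimes> word_prod G zs = x \<otimes> word_prod G (s # zs)"
      using s assms by (auto simp: m_assoc)
    then show ?thesis using zs s Suc by (intro bexI[of _ "s # zs"]) auto
  qed
qed auto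

lemma cayley_walk_exit:
  assumes "S \<subseteq> carrier G" "walk (carrier G) (cayley_adj G S) ws" "P (hd ws)" "\<not> P (last ws)"
    "length ws - 1 < r"
  shows "\<exists>x\<in>set ws. P x \<and> (\<exists>s\<in>S. \<not> P (x \<otimes> s)) \<and> (\<exists>w\<in>word_ball G S r. x = hd ws \<otimes> w)"
proof -
  have ws: "ws \<noteq> []" "set ws \<subseteq> carrier G" "successively (cayley_adj G S) ws"
    using assms(2) unfolding walk_iff_successively by auto
  obtain j where j: "Suc j < length ws" "P (ws ! j)" "\<not> P (ws ! Suc j)"
    using successively_first_exit[OF ws(3,1), of P] assms(3,4) by blast
  have "cayley_adj G S (ws ! j) (ws ! Suc j)" using successively_nth[OF ws(3) j(1)] .
  then obtain s where s: "s \<in> S" "ws ! Suc j = ws ! j \<otimes> s" unfolding cayley_adj_def by blast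
  have "hd ws \<in> carrier G" using ws by (cases ws) auto
  then obtain xs where xs: "xs \<in> lists S" "length xs = j" "ws ! j = hd ws \<otimes> word_prod G xs"
    using cayley_walk_nth[OF assms(1) ws(3), of j] j(1) by auto
  have "word_prod G xs \<in> word_ball G S r" unfolding word_ball_def using xs j(1) assms(5) by auto
  show ?thesis
  proof (rule bexI[of _ "ws ! j"], intro conjI)
    show "\<exists>s\<in>S. \<not> P (ws ! j \<otimes> s)" using s j(3) by auto
    show "\<exists>w\<in>word_ball G S r. ws ! j = hd ws \<otimes> w"
      using \<open>word_prod G xs \<in> word_ball G S r\<close> xs(3) by blast
    show "ws ! j \<in> set ws" using j(1) by simp
  qed (rule j(2))
qed

end

definition isolating_triple ::
  "'v set \<Rightarrow> ('v \<Rightarrow> 'v \<Rightarrow> bool) \<Rightarrow> nat \<Rightarrow> nat \<Rightarrow> 'v set \<Rightarrow> 'v set \<Rightarrow> 'v set \<Rightarrow> bool" where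
  "isolating_triple V E k r U F Ob \<longleftrightarrow>
     U \<subseteq> V \<and> F \<subseteq> V \<and> Ob \<subseteq> V \<and> finite U \<and> finite F \<and> finite Ob \<and>
     U \<inter> F = {} \<and> U \<inter> Ob = {} \<and> F \<inter> Ob = {} \<and> U \<noteq> {} \<and>
     (\<exists>\<mu>. bij_betw \<mu> U Ob \<and> (\<forall>u\<in>U. dist_le V E u (\<mu> u) k)) \<and>
     (\<forall>xs. walk V E xs \<and> hd xs \<in> U \<and> last xs \<in> Ob \<longrightarrow> (\<exists>x\<in>set xs. x \<in> F) \<or> length xs - 1 \<ge> r)"

lemma extraterrestrial_iff_isolating_triples:
  "extraterrestrial V E \<longleftrightarrow>
    (\<forall>m. \<exists>k. \<forall>r. \<exists>U F Ob. isolating_triple V E k r U F Ob \<and> m * card F \<le> card U)"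
  unfolding extraterrestrial_def isolating_triple_def by (intro iff_allI iff_exI) auto

section \<open>Isolating triples from a separating arc orbit\<close>

lemma card_set_mult_le:
  assumes "finite X" "finite Y"
  shows "card (X <#>\<^bsub>G\<^esub> Y) \<le> card X * card Y"
proof -
  have "X <#>\<^bsub>G\<^esub> Y = (\<lambda>(x, y). x \<otimes>\<^bsub>G\<^esub> y) ` (X \<times> Y)"
    unfolding set_mult_def by auto
  then show ?thesis
    using card_image_le[of "X \<times> Y" "\<lambda>(x, y). x \<otimes>\<^bsub>G\<^esub> y"] assms by (simp add: card_cartesian_product)
qed

lemma finite_set_mult: "finite X \<Longrightarrow> finite Y \<Longrightarrow> finite (X <#>\<^bsub>G\<^esub> Y)"
  unfolding set_mult_def by simp

lemma set_mult_singleton: "X <#>\<^bsub>G\<^esub> {w} = (\<lambda>x. x \<otimes>\<^bsub>G\<^esub> w) ` X"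
  unfolding set_mult_def by auto

lemma (in group) card_set_mult_singleton:
  assumes "X \<subseteq> carrier G" "w \<in> carrier G"
  shows "card (X <#> {w}) = card X"
proof -
  have "inj_on (\<lambda>x. x \<otimes> w) X" using assms by (intro inj_onI) (auto simp: subset_iff)
  then show ?thesis by (simp add: set_mult_singleton card_image)
qed

context tree_action
begin

definition arc_orbit :: "'v \<Rightarrow> 'v \<Rightarrow> ('v \<times> 'v) set" where
  "arc_orbit a b = {(\<phi> c a, \<phi> c b) | c. c \<in> carrier G}"

definition arc_rep :: "'v \<Rightarrow> 'v \<Rightarrow> 'v \<times> 'v \<Rightarrow> 'g" where
  "arc_rep a b e = (SOME c. c \<in> carrier G \<and> e = (\<phi> c a, \<phi> c b))"

lemma arc_rep:
  assumes "e \<in> arc_orbit a b"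
  shows "arc_rep a b e \<in> carrier G" "e = (\<phi> (arc_rep a b e) a, \<phi> (arc_rep a b e) b)"
proof -
  have "\<exists>c. c \<in> carrier G \<and> e = (\<phi> c a, \<phi> c b)" using assms unfolding arc_orbit_def by blast
  then have "arc_rep a b e \<in> carrier G \<and> e = (\<phi> (arc_rep a b e) a, \<phi> (arc_rep a b e) b)"
    unfolding arc_rep_def by (rule someI_ex)
  then show "arc_rep a b e \<in> carrier G" "e = (\<phi> (arc_rep a b e) a, \<phi> (arc_rep a b e) b)" by auto
qed

lemma subgroup_arc_stabilizer: "subgroup (stabilizer G \<phi> a \<inter> stabilizer G \<phi> b) G"
  using group_action.stabilizer_subgroup[OF action] by (intro subgroups_Inter_pair) auto

end

locale isolating_setup = tree_action T G \<phi>
  for T :: "'v \<Rightarrow> 'v \<Rightarrow> bool" and G :: "('g, 'b) monoid_scheme" (structure) and \<phi> +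
  fixes S :: "'g set" and a b x0 :: 'v and \<mu> :: "'g set \<Rightarrow> real"
  assumes finite_gens: "finite S" and gens_subset: "S \<subseteq> carrier G"
    and gens_sym: "\<forall>s\<in>S. inv s \<in> S" and gens_generate: "generate G S = carrier G"
    and arc: "T a b"
    and mean: "invariant_mean G (stabilizer G \<phi> a \<inter> stabilizer G \<phi> b) \<mu>"
    and many_translates: "\<forall>M. \<exists>g\<in>carrier G. M \<le> card (sep_edges T x0 (\<phi> g x0) \<inter> arc_orbit a b)"
begin

abbreviation H :: "'g set" where
  "H \<equiv> stabilizer G \<phi> a \<inter> stabilizer G \<phi> b"

definition near_arcs :: "('v \<times> 'v) set" where
  "near_arcs = (\<Union>s\<in>S. sep_edges T x0 (\<phi> s x0))"

definition crossing :: "'g \<Rightarrow> bool" where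
  "crossing x \<longleftrightarrow> x \<in> carrier G \<and> \<phi> x x0 \<in> half_tree T b a \<and> (\<exists>s\<in>S. \<phi> (x \<otimes> s) x0 \<in> half_tree T a b)"

definition translates :: "('v \<times> 'v) set \<Rightarrow> 'g set \<Rightarrow> 'g set" where
  "translates E A = (\<Union>e\<in>E. A <#> {inv (arc_rep a b e)})"

definition connectors :: "('v \<times> 'v) set \<Rightarrow> nat \<Rightarrow> 'g set" where
  "connectors E r = H \<inter> (\<Union>e\<in>E. \<Union>y\<in>word_ball G S r. \<Union>p\<in>near_arcs.
     {inv (arc_rep a b e) \<otimes> y \<otimes> arc_rep a b p})"

definition crossings_near :: "'g set \<Rightarrow> nat \<Rightarrow> 'g set" where
  "crossings_near U r = {x \<in> U <#> word_ball G S r. crossing x}"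

lemma H_subset: "H \<subseteq> carrier G"
  unfolding stabilizer_def by blast

lemma H_fixes: "h \<in> H \<Longrightarrow> \<phi> h a = a \<and> \<phi> h b = b"
  unfolding stabilizer_def by blast

lemma finite_near_arcs: "finite near_arcs"
  unfolding near_arcs_def using finite_gens finite_sep_edges by blast

lemma finite_connectors: "finite E \<Longrightarrow> finite (connectors E r)"
  unfolding connectors_def using finite_word_ball[OF finite_gens] finite_near_arcs by blast

lemma countable_H: "countable H"
  using group.countable_carrier_if_generated[OF is_group finite_gens gens_subset gens_sym
      gens_generate] H_subset countable_subset by blast

lemma stab_inv_rep_fixes:
  assumes "h \<in> H" "c \<in> carrier G" "v = a \<or> v = b"
  shows "\<phi> (h \<otimes> inv c) (\<phi> c v) = v"
  using assms H_fixes[OF assms(1)] H_subset act_mult act_inv_act by auto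

lemma half_tree_stab_inv_rep:
  assumes "h \<in> H" "c \<in> carrier G"
  shows "\<phi> (h \<otimes> inv c) z \<in> half_tree T a b \<longleftrightarrow> z \<in> half_tree T (\<phi> c a) (\<phi> c b)"
    and "\<phi> (h \<otimes> inv c) z \<in> half_tree T b a \<longleftrightarrow> z \<in> half_tree T (\<phi> c b) (\<phi> c a)"
proof -
  have u: "h \<otimes> inv c \<in> carrier G" using assms H_subset by auto
  show "\<phi> (h \<otimes> inv c) z \<in> half_tree T a b \<longleftrightarrow> z \<in> half_tree T (\<phi> c a) (\<phi> c b)"
    using act_mem_half_tree_iff[OF u, of z "\<phi> c a" "\<phi> c b"] stab_inv_rep_fixes[OF assms] by simp
  show "\<phi> (h \<otimes> inv c) z \<in> half_tree T b a \<longleftrightarrow> z \<in> half_tree T (\<phi> c b) (\<phi> c a)"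
    using act_mem_half_tree_iff[OF u, of z "\<phi> c b" "\<phi> c a"] stab_inv_rep_fixes[OF assms] by simp
qed

lemma translates_sides:
  assumes E: "E \<subseteq> sep_edges T x0 (\<phi> g x0) \<inter> arc_orbit a b - near_arcs"
    and "A \<subseteq> H" "g \<in> carrier G" "u \<in> translates E A"
  shows "\<phi> u x0 \<in> half_tree T b a" "\<forall>s\<in>S. \<phi> (u \<otimes> s) x0 \<in> half_tree T b a"
    "\<phi> (u \<otimes> g) x0 \<in> half_tree T a b"
proof -
  obtain e h where eh: "e \<in> E" "h \<in> A" "u = h \<otimes> inv (arc_rep a b e)"
    using assms(4) unfolding translates_def set_mult_def by blast
  define c where "c = arc_rep a b e"
  have "e \<in> arc_orbit a b" using E eh(1) by blast
  then have c: "c \<in> carrier G" "e = (\<phi> c a, \<phi> c b)" unfolding c_def by (rule arc_rep)+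
  have h: "h \<in> H" using eh(2) assms(2) by blast
  have u: "u \<in> carrier G" using eh(3) h c H_subset unfolding c_def by auto
  have T_c: "T (\<phi> c a) (\<phi> c b)" using adj_act_iff[OF c(1)] arc by simp
  have sep: "x0 \<notin> half_tree T (\<phi> c a) (\<phi> c b)" "\<phi> g x0 \<in> half_tree T (\<phi> c a) (\<phi> c b)"
    using E eh(1) c(2) unfolding sep_edges_def by auto
  have not_near: "\<phi> s x0 \<notin> half_tree T (\<phi> c a) (\<phi> c b)" if "s \<in> S" for s
    using E eh(1) c(2) sep(1) T_c that unfolding near_arcs_def sep_edges_def by blast
  show "\<phi> u x0 \<in> half_tree T b a"
    using half_tree_stab_inv_rep(2)[OF h c(1)] half_tree_compl[OF T_c] sep(1) eh(3)
    unfolding c_def by simp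
  show "\<forall>s\<in>S. \<phi> (u \<otimes> s) x0 \<in> half_tree T b a"
  proof
    fix s assume s: "s \<in> S"
    then have "\<phi> (u \<otimes> s) x0 = \<phi> u (\<phi> s x0)" using u gens_subset act_mult by blast
    then show "\<phi> (u \<otimes> s) x0 \<in> half_tree T b a"
      using half_tree_stab_inv_rep(2)[OF h c(1)] half_tree_compl[OF T_c] not_near[OF s] eh(3)
      unfolding c_def by simp
  qed
  have "\<phi> (u \<otimes> g) x0 = \<phi> u (\<phi> g x0)" using u assms(3) act_mult by blast
  then show "\<phi> (u \<otimes> g) x0 \<in> half_tree T a b"
    using half_tree_stab_inv_rep(1)[OF h c(1)] sep(2) eh(3) unfolding c_def by simp
qed

lemma card_translates:
  assumes "finite E" "E \<subseteq> arc_orbit a b" "A \<subseteq> H" "finite A"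
  shows "card (translates E A) = card E * card A"
proof -
  have rep: "arc_rep a b e \<in> carrier G" "e = (\<phi> (arc_rep a b e) a, \<phi> (arc_rep a b e) b)"
    if "e \<in> E" for e
    using arc_rep assms(2) that by blast+
  have A: "A \<subseteq> carrier G" using assms(3) H_subset by blast
  have arc_of: "e = (\<phi> (inv u) a, \<phi> (inv u) b)"
    if e: "e \<in> E" and u: "u \<in> A <#> {inv (arc_rep a b e)}" for e u
  proof -
    obtain h where h: "h \<in> A" "u = h \<otimes> inv (arc_rep a b e)"
      using u unfolding set_mult_def by blast
    have hc: "h \<in> carrier G" "inv h \<in> H"
      using h(1) assms(3) A subgroup.m_inv_closed[OF subgroup_arc_stabilizer] by auto
    have "inv u = arc_rep a b e \<otimes> inv h" using h hc(1) rep[OF e] by (simp add: inv_mult_group)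
    then have "\<phi> (inv u) v = \<phi> (arc_rep a b e) v" if "v = a \<or> v = b" for v
      using that H_fixes[OF hc(2)] act_mult[OF rep(1)[OF e] inv_closed[OF hc(1)]] by auto
    then show ?thesis using rep(2)[OF e] by simp
  qed
  have "card (translates E A) = (\<Sum>e\<in>E. card (A <#> {inv (arc_rep a b e)}))"
    unfolding translates_def
  proof (rule card_UN_disjoint[OF assms(1)])
    show "\<forall>e\<in>E. finite (A <#> {inv (arc_rep a b e)})"
      using assms(4) by (simp add: set_mult_singleton)
    show "\<forall>e\<in>E. \<forall>e'\<in>E. e \<noteq> e' \<longrightarrow>
        (A <#> {inv (arc_rep a b e)}) \<inter> (A <#> {inv (arc_rep a b e')}) = {}"
      using arc_of by blast
  qed
  also have "\<dots> = (\<Sum>e\<in>E. card A)"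
    using card_set_mult_singleton[OF A] rep by simp
  finally show ?thesis by simp
qed

lemma crossing_coset:
  assumes "crossing x"
  shows "\<exists>p\<in>near_arcs. p \<in> arc_orbit a b \<and> x \<otimes> arc_rep a b p \<in> H"
proof -
  obtain s where s: "s \<in> S" "\<phi> (x \<otimes> s) x0 \<in> half_tree T a b"
    and x: "x \<in> carrier G" "\<phi> x x0 \<in> half_tree T b a"
    using assms unfolding crossing_def by blast
  define p where "p = (\<phi> (inv x) a, \<phi> (inv x) b)"
  have s_car: "s \<in> carrier G" using s(1) gens_subset by blast
  have "\<phi> x x0 \<notin> half_tree T a b" using x(2) half_tree_compl[OF arc] by blast
  then have "(a, b) \<in> sep_edges T (\<phi> x x0) (\<phi> x (\<phi> s x0))"
    using arc s(2) act_mult[OF x(1) s_car] unfolding sep_edges_def by simp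
  then have "(\<phi> x (\<phi> (inv x) a), \<phi> x (\<phi> (inv x) b)) \<in> sep_edges T (\<phi> x x0) (\<phi> x (\<phi> s x0))"
    using act_act_inv[OF x(1)] by simp
  then have "p \<in> sep_edges T x0 (\<phi> s x0)" unfolding p_def act_mem_sep_edges_iff[OF x(1)] .
  then have near: "p \<in> near_arcs" unfolding near_arcs_def using s(1) by blast
  have orbit: "p \<in> arc_orbit a b" unfolding p_def arc_orbit_def using x(1) by blast
  define c where "c = arc_rep a b p"
  have c: "c \<in> carrier G" "p = (\<phi> c a, \<phi> c b)" unfolding c_def using arc_rep[OF orbit] by auto
  have "\<phi> (x \<otimes> c) v = v" if "v = a \<or> v = b" for v
    using that c(1) c(2)[symmetric] act_mult[OF x(1) c(1)] act_act_inv[OF x(1)] unfolding p_def by auto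
  then have "x \<otimes> c \<in> H" using x(1) c(1) unfolding stabilizer_def by auto
  then show ?thesis using near orbit unfolding c_def by blast
qed

lemma crossings_near_subset:
  assumes "E \<subseteq> arc_orbit a b" "A \<subseteq> H"
  shows "crossings_near (translates E A) r \<subseteq>
    (A <#> connectors E r) <#> (\<lambda>p. inv (arc_rep a b p)) ` near_arcs"
proof
  fix x assume "x \<in> crossings_near (translates E A) r"
  then obtain e h y where ehy: "e \<in> E" "h \<in> A" "y \<in> word_ball G S r"
    "x = h \<otimes> inv (arc_rep a b e) \<otimes> y" and cr: "crossing x"
    unfolding crossings_near_def translates_def set_mult_def by blast
  obtain p where p: "p \<in> near_arcs" "p \<in> arc_orbit a b" "x \<otimes> arc_rep a b p \<in> H"
    using crossing_coset[OF cr] by blast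
  have car: "h \<in> carrier G" "arc_rep a b e \<in> carrier G" "y \<in> carrier G" "arc_rep a b p \<in> carrier G"
    using ehy(1-3) p(2) assms H_subset arc_rep word_ball_subset[OF gens_subset] by blast+
  define k where "k = inv (arc_rep a b e) \<otimes> y \<otimes> arc_rep a b p"
  have hk: "h \<otimes> k = x \<otimes> arc_rep a b p" unfolding k_def ehy(4) using car by (simp add: m_assoc)
  have "inv h \<in> H" using ehy(2) assms(2) subgroup.m_inv_closed[OF subgroup_arc_stabilizer] by blast
  then have "inv h \<otimes> (x \<otimes> arc_rep a b p) \<in> H"
    using p(3) subgroup.m_closed[OF subgroup_arc_stabilizer] by blast
  moreover have "inv h \<otimes> (h \<otimes> k) = k" using car unfolding k_def by (simp add: m_assoc[symmetric])
  ultimately have "k \<in> H" using hk by simp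
  then have "k \<in> connectors E r" using ehy(1,3) p(1) unfolding connectors_def k_def by blast
  then have "h \<otimes> k \<in> A <#> connectors E r" using ehy(2) unfolding set_mult_def by blast
  moreover have "x = h \<otimes> k \<otimes> inv (arc_rep a b p)"
    using hk car cr unfolding crossing_def by (simp add: m_assoc)
  ultimately show "x \<in> (A <#> connectors E r) <#> (\<lambda>p. inv (arc_rep a b p)) ` near_arcs"
    using p(1) unfolding set_mult_def by blast
qed

lemma translates_walks_cross:
  assumes E: "E \<subseteq> sep_edges T x0 (\<phi> g x0) \<inter> arc_orbit a b - near_arcs"
    and "A \<subseteq> H" "g \<in> carrier G"
    and ws: "walk (carrier G) (cayley_adj G S) ws" "hd ws \<in> translates E A"
      "last ws \<in> translates E A <#> {g}" "length ws - 1 < r"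
  shows "\<exists>x\<in>set ws. x \<in> crossings_near (translates E A) r"
proof -
  let ?P = "\<lambda>x. \<phi> x x0 \<in> half_tree T b a"
  have "?P (hd ws)" using translates_sides(1)[OF E assms(2,3) ws(2)] .
  moreover have "\<not> ?P (last ws)"
    using ws(3) translates_sides(3)[OF E assms(2,3)] half_tree_compl[OF arc]
    unfolding set_mult_def by auto
  ultimately have "\<exists>x\<in>set ws. ?P x \<and> (\<exists>s\<in>S. \<not> ?P (x \<otimes> s)) \<and> (\<exists>w\<in>word_ball G S r. x = hd ws \<otimes> w)"
    using group.cayley_walk_exit[OF is_group gens_subset ws(1), of ?P r] ws(4) by blast
  then obtain x s w where x: "x \<in> set ws" "?P x" "s \<in> S" "\<not> ?P (x \<otimes> s)"
      "w \<in> word_ball G S r" "x = hd ws \<otimes> w"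
    by blast
  have "x \<in> carrier G" using x(1) ws(1) unfolding walk_def by blast
  then have "crossing x"
    using x(2-4) half_tree_compl[OF adj_sym[OF arc]] unfolding crossing_def by blast
  moreover have "x \<in> translates E A <#> word_ball G S r"
    using x(5,6) ws(2) unfolding set_mult_def by blast
  ultimately show ?thesis using x(1) unfolding crossings_near_def by blast
qed

lemma card_crossings_near:
  assumes "E \<subseteq> arc_orbit a b" "A \<subseteq> H" "finite A" "finite E"
  shows "card (crossings_near (translates E A) r) \<le> card (A <#> connectors E r) * card near_arcs"
proof -
  have fin: "finite (A <#> connectors E r)" using finite_set_mult assms(3) finite_connectors[OF assms(4)] .
  have "card (crossings_near (translates E A) r)
      \<le> card ((A <#> connectors E r) <#> (\<lambda>p. inv (arc_rep a b p)) ` near_arcs)"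
    using crossings_near_subset[OF assms(1,2)] finite_set_mult[OF fin finite_imageI[OF finite_near_arcs]]
    by (intro card_mono)
  also have "\<dots> \<le> card (A <#> connectors E r) * card ((\<lambda>p. inv (arc_rep a b p)) ` near_arcs)"
    using card_set_mult_le[OF fin finite_imageI[OF finite_near_arcs]] .
  also have "\<dots> \<le> card (A <#> connectors E r) * card near_arcs"
    using card_image_le[OF finite_near_arcs, of "\<lambda>p. inv (arc_rep a b p)"] by (rule mult_le_mono2)
  finally show ?thesis .
qed

lemma translates_isolating_triple:
  assumes g: "g \<in> carrier G" "xg \<in> lists S" "word_prod G xg = g"
    and E: "finite E" "E \<noteq> {}" "E \<subseteq> sep_edges T x0 (\<phi> g x0) \<inter> arc_orbit a b - near_arcs"
    and A: "A \<subseteq> H" "finite A" "A \<noteq> {}"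
  shows "isolating_triple (carrier G) (cayley_adj G S) (length xg) r
    (translates E A) (crossings_near (translates E A) r) (translates E A <#> {g})"
proof -
  define U where "U = translates E A"
  define F where "F = crossings_near U r"
  define Ob where "Ob = U <#> {g}"
  have U_car: "U \<subseteq> carrier G"
    using A(1) H_subset arc_rep E(3) unfolding U_def translates_def set_mult_def by blast
  have F_car: "F \<subseteq> carrier G" unfolding F_def crossings_near_def crossing_def by blast
  have Ob_car: "Ob \<subseteq> carrier G" using U_car g(1) unfolding Ob_def set_mult_def by blast
  have U_fin: "finite U"
    unfolding U_def translates_def set_mult_singleton using A(2) E(1) by blast
  have "F \<subseteq> U <#> word_ball G S r" unfolding F_def crossings_near_def by blast
  then have F_fin: "finite F"
    using finite_set_mult[OF U_fin finite_word_ball[OF finite_gens]] by (rule finite_subset)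
  have Ob_fin: "finite Ob" unfolding Ob_def set_mult_singleton using U_fin by blast
  note sides = translates_sides[OF E(3) A(1) g(1), folded U_def]
  have U_side: "\<phi> u x0 \<in> half_tree T b a" if "u \<in> U \<union> F" for u
    using that sides(1) unfolding F_def crossings_near_def crossing_def by blast
  have Ob_side: "\<phi> x x0 \<in> half_tree T a b" if "x \<in> Ob" for x
    using that sides(3) unfolding Ob_def set_mult_def by blast
  have UF: "U \<inter> F = {}"
    using sides(2) half_tree_disjoint[OF arc] unfolding F_def crossings_near_def crossing_def by blast
  have UOb: "U \<inter> Ob = {}" and FOb: "F \<inter> Ob = {}"
    using U_side Ob_side half_tree_disjoint[OF arc] by blast+
  have U_ne: "U \<noteq> {}" using E(2) A(3) unfolding U_def translates_def set_mult_def by blast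
  have shift: "\<exists>\<mu>. bij_betw \<mu> U Ob \<and> (\<forall>u\<in>U. dist_le (carrier G) (cayley_adj G S) u (\<mu> u) (length xg))"
  proof (intro exI conjI)
    show "bij_betw (\<lambda>u. u \<otimes> g) U Ob"
      unfolding Ob_def set_mult_singleton using U_car g(1)
      by (intro inj_on_imp_bij_betw inj_onI) (auto simp: subset_iff)
    show "\<forall>u\<in>U. dist_le (carrier G) (cayley_adj G S) u (u \<otimes> g) (length xg)"
      using cayley_walk_word[OF gens_subset g(2)] U_car g(3) by blast
  qed
  have walks: "\<forall>ws. walk (carrier G) (cayley_adj G S) ws \<and> hd ws \<in> U \<and> last ws \<in> Ob \<longrightarrow>
      (\<exists>x\<in>set ws. x \<in> F) \<or> length ws - 1 \<ge> r"
  proof (intro allI impI)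
    fix ws assume ws: "walk (carrier G) (cayley_adj G S) ws \<and> hd ws \<in> U \<and> last ws \<in> Ob"
    show "(\<exists>x\<in>set ws. x \<in> F) \<or> length ws - 1 \<ge> r"
    proof (cases "length ws - 1 < r")
      case True
      then show ?thesis using translates_walks_cross[OF E(3) A(1) g(1)] ws
        unfolding F_def U_def Ob_def by blast
    qed simp
  qed
  show ?thesis
    unfolding isolating_triple_def U_def[symmetric] F_def[symmetric] Ob_def[symmetric]
    using U_car F_car Ob_car U_fin F_fin Ob_fin UF UOb FOb U_ne shift walks by blast
qed

lemma isolating_triple_for_radius:
  assumes g: "g \<in> carrier G" "xg \<in> lists S" "word_prod G xg = g"
    and E: "finite E" "E \<noteq> {}" "E \<subseteq> sep_edges T x0 (\<phi> g x0) \<inter> arc_orbit a b - near_arcs"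
  shows "\<exists>U F Ob. isolating_triple (carrier G) (cayley_adj G S) (length xg) r U F Ob \<and>
    card E * card F \<le> 2 * card near_arcs * card U"
proof -
  interpret invariant_mean G H \<mu> by (rule mean)
  have K: "finite (connectors E r)" "connectors E r \<subseteq> H"
    using finite_connectors[OF E(1)] unfolding connectors_def by auto
  obtain A where A: "A \<subseteq> H" "finite A" "A \<noteq> {}" "card (A <#> connectors E r) \<le> 2 * card A"
    using small_doubling_set[OF countable_H K] by blast
  have E_orbit: "E \<subseteq> arc_orbit a b" using E(3) by blast
  have "card E * card (crossings_near (translates E A) r)
      \<le> card E * (card (A <#> connectors E r) * card near_arcs)"
    using card_crossings_near[OF E_orbit A(1,2) E(1)] by simp
  also have "\<dots> \<le> card E * (2 * card A * card near_arcs)" using A(4) by simp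
  also have "\<dots> = 2 * card near_arcs * card (translates E A)"
    unfolding card_translates[OF E(1) E_orbit A(1,2)] by simp
  finally show ?thesis using translates_isolating_triple[OF g E A(1-3)] by blast
qed
end

lemma unbounded_card_pigeonhole:
  assumes "finite C" "\<And>g. g \<in> X \<Longrightarrow> finite (Y g) \<and> Y g \<subseteq> \<Union>C"
    and unbounded: "\<forall>M. \<exists>g\<in>X. M \<le> card (Y g)"
  shows "\<exists>c\<in>C. \<forall>M. \<exists>g\<in>X. M \<le> card (Y g \<inter> c)"
proof (rule ccontr)
  assume "\<not> ?thesis"
  then have "\<forall>c\<in>C. \<exists>M. \<forall>g\<in>X. card (Y g \<inter> c) < M" by (meson not_le)
  then obtain bound where bound: "\<And>c g. c \<in> C \<Longrightarrow> g \<in> X \<Longrightarrow> card (Y g \<inter> c) < bound c"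
    by metis
  obtain g where g: "g \<in> X" "(\<Sum>c\<in>C. bound c) \<le> card (Y g)" using unbounded by blast
  obtain g1 where "g1 \<in> X" "1 \<le> card (Y g1)" using unbounded by blast
  then have "C \<noteq> {}" using assms(2)[of g1] by fastforce
  have "Y g = (\<Union>c\<in>C. Y g \<inter> c)" using assms(2)[OF g(1)] by blast
  then have "card (Y g) \<le> (\<Sum>c\<in>C. card (Y g \<inter> c))"
    using card_UN_le[OF assms(1), of "\<lambda>c. Y g \<inter> c"] by simp
  also have "\<dots> < (\<Sum>c\<in>C. bound c)"
    using assms(1) \<open>C \<noteq> {}\<close> bound g(1) by (intro sum_strict_mono) auto
  finally show False using g(2) by simp
qed

context group
begin

lemma symmetric_generating_set:
  assumes "finitely_generated G"
  shows "\<exists>S. finite S \<and> S \<subseteq> carrier G \<and> (\<forall>s\<in>S. inv s \<in> S) \<and> generate G S = carrier G"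
proof -
  obtain S0 where S0: "finite S0" "S0 \<subseteq> carrier G" "generate G S0 = carrier G"
    using assms unfolding finitely_generated_def by blast
  define S where "S = S0 \<union> (\<lambda>s. inv s) ` S0"
  have S: "finite S" "S \<subseteq> carrier G" "\<forall>s\<in>S. inv s \<in> S" unfolding S_def using S0 by auto
  have "carrier G \<subseteq> generate G S" using mono_generate[of S0 S] S0(3) unfolding S_def by blast
  then have "generate G S = carrier G" using generate_incl[OF S(2)] by blast
  then show ?thesis using S by blast
qed

end

context tree_action
begin

lemma unbounded_orbit:
  assumes "without_inversions G \<phi> T" "\<not> (\<exists>v. \<forall>g\<in>carrier G. \<phi> g v = v)"
  shows "\<forall>M. \<exists>g\<in>carrier G. M \<le> tree_dist T x0 (\<phi> g x0)"
proof
  fix M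
  show "\<exists>g\<in>carrier G. M \<le> tree_dist T x0 (\<phi> g x0)"
  proof (rule ccontr)
    assume "\<not> ?thesis"
    then have "\<forall>g\<in>carrier G. tree_dist T x0 (\<phi> g x0) \<le> M" by auto
    then show False using bounded_orbit_fixed_point assms by blast
  qed
qed

lemma mem_arc_orbit_self: "(a, b) \<in> arc_orbit a b"
  unfolding arc_orbit_def using act_one one_closed by (metis (mono_tags, lifting) mem_Collect_eq)

text \<open>Finitely many arc orbits share the unboundedly many arcs separating x0 from its
  translates, so one orbit gets unboundedly many of them.\<close>
lemma many_separating_translates:
  assumes "without_inversions G \<phi> T" "\<not> (\<exists>v. \<forall>g\<in>carrier G. \<phi> g v = v)" "cocompact G \<phi> T"
  shows "\<exists>a b. T a b \<and> (\<forall>M. \<exists>g\<in>carrier G. M \<le> card (sep_edges T x0 (\<phi> g x0) \<inter> arc_orbit a b))"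
proof -
  define C where "C = (\<lambda>(a, b). arc_orbit a b) ` {(a, b). T a b}"
  have "finite C" using assms(3) unfolding cocompact_def C_def arc_orbit_def by simp
  moreover have "finite (sep_edges T x0 (\<phi> g x0)) \<and> sep_edges T x0 (\<phi> g x0) \<subseteq> \<Union>C" for g
    using finite_sep_edges mem_arc_orbit_self unfolding C_def sep_edges_def by fastforce
  moreover have "\<forall>M. \<exists>g\<in>carrier G. M \<le> card (sep_edges T x0 (\<phi> g x0))"
    using unbounded_orbit[OF assms(1,2)] unfolding tree_dist_def .
  ultimately obtain c where c: "c \<in> C" "\<forall>M. \<exists>g\<in>carrier G. M \<le> card (sep_edges T x0 (\<phi> g x0) \<inter> c)"
    using unbounded_card_pigeonhole[of C "carrier G" "\<lambda>g. sep_edges T x0 (\<phi> g x0)"] by blast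
  then obtain a b where "T a b" "c = arc_orbit a b" unfolding C_def by blast
  then show ?thesis using c(2) by blast
qed

lemma arc_stabilizer_mean:
  assumes "without_inversions G \<phi> T" "T a b"
    and "amenable (G\<lparr>carrier := edge_stabilizer G \<phi> a b\<rparr>)"
  shows "\<exists>\<mu>. invariant_mean G (stabilizer G \<phi> a \<inter> stabilizer G \<phi> b) \<mu>"
proof -
  define H where "H = stabilizer G \<phi> a \<inter> stabilizer G \<phi> b"
  have "edge_stabilizer G \<phi> a b = H"
    using assms(1,2) unfolding H_def edge_stabilizer_def stabilizer_def without_inversions_def by blast
  then have "\<exists>\<mu> :: 'g set \<Rightarrow> real. \<mu> H = 1 \<and> (\<forall>A. A \<subseteq> H \<longrightarrow> 0 \<le> \<mu> A) \<and>
      (\<forall>A B. A \<subseteq> H \<longrightarrow> B \<subseteq> H \<longrightarrow> A \<inter> B = {} \<longrightarrow> \<mu> (A \<union> B) = \<mu> A + \<mu> B) \<and>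
      (\<forall>g A. g \<in> H \<longrightarrow> A \<subseteq> H \<longrightarrow> \<mu> ((\<lambda>x. g \<otimes> x) ` A) = \<mu> A)"
    using assms(3) unfolding amenable_def by simp
  then obtain \<mu> :: "'g set \<Rightarrow> real" where "\<mu> H = 1" "\<forall>A. A \<subseteq> H \<longrightarrow> 0 \<le> \<mu> A"
      "\<forall>A B. A \<subseteq> H \<longrightarrow> B \<subseteq> H \<longrightarrow> A \<inter> B = {} \<longrightarrow> \<mu> (A \<union> B) = \<mu> A + \<mu> B"
      "\<forall>g A. g \<in> H \<longrightarrow> A \<subseteq> H \<longrightarrow> \<mu> ((\<lambda>x. g \<otimes> x) ` A) = \<mu> A"
    by blast
  then have "invariant_mean G H \<mu>"
    using subgroup_arc_stabilizer unfolding H_def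
    by (intro invariant_mean.intro[OF is_group] invariant_mean_axioms.intro) simp_all
  then show ?thesis unfolding H_def by blast
qed

end

context isolating_setup
begin

lemma extraterrestrial_cayley_graph: "extraterrestrial (carrier G) (cayley_adj G S)"
  unfolding extraterrestrial_iff_isolating_triples
proof
  fix m
  define M where "M = 2 * m * card near_arcs + 1"
  obtain g where g: "g \<in> carrier G" "M + card near_arcs \<le> card (sep_edges T x0 (\<phi> g x0) \<inter> arc_orbit a b)"
    using many_translates by blast
  have "M \<le> card (sep_edges T x0 (\<phi> g x0) \<inter> arc_orbit a b - near_arcs)"
    using g(2) diff_card_le_card_Diff[OF finite_near_arcs, of "sep_edges T x0 (\<phi> g x0) \<inter> arc_orbit a b"]
    by linarith
  then obtain E where E: "E \<subseteq> sep_edges T x0 (\<phi> g x0) \<inter> arc_orbit a b - near_arcs" "card E = M" "finite E"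
    by (meson obtain_subset_with_card_n)
  have "E \<noteq> {}" using E(2,3) unfolding M_def by auto
  obtain xg where xg: "xg \<in> lists S" "word_prod G xg = g"
    using generate_subset_word_prods[OF gens_subset gens_sym] gens_generate g(1) by blast
  have "\<exists>U F Ob. isolating_triple (carrier G) (cayley_adj G S) (length xg) r U F Ob \<and> m * card F \<le> card U"
    for r
  proof -
    obtain U F Ob where UFO: "isolating_triple (carrier G) (cayley_adj G S) (length xg) r U F Ob"
      "M * card F \<le> 2 * card near_arcs * card U"
      using isolating_triple_for_radius[OF g(1) xg E(3) \<open>E \<noteq> {}\<close> E(1)] E(2) by blast
    have "m * card F \<le> card U"
    proof (cases "card near_arcs = 0")
      case False
      have "2 * card near_arcs * (m * card F) \<le> M * card F" unfolding M_def by (simp add: algebra_simps)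
      also have "\<dots> \<le> 2 * card near_arcs * card U" by (rule UFO(2))
      finally show ?thesis using False by simp
    qed (use UFO(2) M_def in simp)
    then show ?thesis using UFO(1) by blast
  qed
  then show "\<exists>k. \<forall>r. \<exists>U F Ob. isolating_triple (carrier G) (cayley_adj G S) k r U F Ob \<and> m * card F \<le> card U"
    by blast
qed

end

theorem mainTheorem13:
  fixes G :: "('g, 'b) monoid_scheme"
    and \<phi> :: "'g \<Rightarrow> 'v \<Rightarrow> 'v"
    and T :: "'v \<Rightarrow> 'v \<Rightarrow> bool"
  assumes "group G"
    and "finitely_generated G"
    and "acts_on_tree G \<phi> T"
    and "without_inversions G \<phi> T"
    and "cocompact G \<phi> T"
    and "\<not> (\<exists>v. \<forall>g\<in>carrier G. \<phi> g v = v)"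
    and "\<forall>u v. T u v \<longrightarrow> amenable (G\<lparr>carrier := edge_stabilizer G \<phi> u v\<rparr>)"
  shows "extraterrestrial_group G"
proof -
  note tree_act = acts_on_tree_imp_tree_action[OF assms(1,3)]
  interpret tree_action T G \<phi> by (rule tree_act)
  obtain S where S: "finite S" "S \<subseteq> carrier G" "\<forall>s\<in>S. inv\<^bsub>G\<^esub> s \<in> S" "generate G S = carrier G"
    using symmetric_generating_set[OF assms(2)] by blast
  \<comment> \<open>The base vertex is arbitrary, so we take undefined.\<close>
  obtain a b where ab: "T a b"
    "\<forall>M. \<exists>g\<in>carrier G. M \<le> card (sep_edges T undefined (\<phi> g undefined) \<inter> arc_orbit a b)"
    using many_separating_translates[OF assms(4,6,5)] by blast
  obtain \<mu> where "invariant_mean G (stabilizer G \<phi> a \<inter> stabilizer G \<phi> b) \<mu>"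
    using arc_stabilizer_mean[OF assms(4) ab(1)] assms(7) ab(1) by blast
  then interpret isolating_setup T G \<phi> S a b undefined \<mu>
    using S ab by (intro isolating_setup.intro[OF tree_act] isolating_setup_axioms.intro) auto
  show ?thesis
    unfolding extraterrestrial_group_def using S extraterrestrial_cayley_graph by blast
qed

end
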